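(* Let $k$ be an algebraically closed field and $\Lambda=kQ/I$ ($Q$ finite quiver, $I$ admissible ideal) satisfy condition (C) below with $n$ vertices. Then: (1) for every arrow $\alpha:i\to j$ of $Q^{\circ}$, $e_i(\operatorname{rad}\Lambda)\alpha=\alpha(\operatorname{rad}\Lambda)e_j$; (2) for vertices $i,j$ and $w\in e_i\Lambda e_j$, there exist a unique $a\in k$ and some (not necessarily unique) $l\in e_i(\operatorname{rad}\Lambda)e_i$ with $w=(ae_i+l)w^i_j$ in $\Lambda$; also there exist a unique $a'\in k$ and some $l'\in e_j(\operatorname{rad}\Lambda)e_j$ with $w=w^i_j(a'e_j+l')$; moreover $a=a'$; (3) let $f\in\operatorname{Hom}_\Lambda(P_j,P_i)$ be given by left multiplication by $w=(ae_i+l)w^i_j$ with $a\neq 0$ and $l\in e_i(\operatorname{rad}\Lambda)e_i$, and let $V\subseteq Q_0$. Then $f$ factors through $\bigoplus_{t\in V}P_t$ if and only if the path $w^j_i$ passes through some vertex $t\in V$.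
   Context: Condition (C): (a) the quiver $Q^{\circ}$ obtained from $Q$ by deleting all loops is isomorphic to the quiver with vertices $1,\dots,n$ having exactly one arrow $i\to i+1$ and one arrow $i+1\to i$ for each $1\le i\le n-1$, and no others; (b) for every arrow $x:i\to j$ of $Q$ with $i\ne j$, $x\Lambda e_j=e_i\Lambda e_j=e_i\Lambda x$; (c) for every pair $(i,j)$ of vertices, $w^i_j\ne0$ in $\Lambda$, where $w^i_j$ is the shortest path from $i$ to $j$ in $Q$ (so $w^i_j\in e_i\Lambda e_j$; paths are composed left to right, $\alpha\beta$ = first $\alpha$ then $\beta$). $P_i=e_i\Lambda$ (right modules); a morphism $P_j\to P_i$ "given by $w\in e_i\Lambda e_j$" sends $e_j\lambda\mapsto w\lambda$. A path "passes through" a vertex $t$ if $t$ is one of its vertices, endpoints included. *)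

theory Defs
  imports "HOL-Computational_Algebra.Polynomial"
begin

definition alg_closed :: "'k::field itself \<Rightarrow> bool" where
  "alg_closed _ \<longleftrightarrow> (\<forall>p::'k poly. 0 < degree p \<longrightarrow> (\<exists>x. poly p x = 0))"

text \<open>A path is a pair (v, as): a start vertex v and a list of arrows as (composed left to right);
  (v, []) is the trivial path e_v.\<close>

type_synonym ('v, 'e) qpath = "'v \<times> 'e list"

definition valid_path :: "('e \<Rightarrow> 'v) \<Rightarrow> ('e \<Rightarrow> 'v) \<Rightarrow> ('v, 'e) qpath \<Rightarrow> bool" where
  "valid_path src tgt p \<longleftrightarrow>
     (snd p \<noteq> [] \<longrightarrow> src (hd (snd p)) = fst p) \<and>
     (\<forall>i. Suc i < length (snd p) \<longrightarrow> tgt (snd p ! i) = src (snd p ! Suc i))"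

definition pend :: "('e \<Rightarrow> 'v) \<Rightarrow> ('v, 'e) qpath \<Rightarrow> 'v" where
  "pend tgt p = (if snd p = [] then fst p else tgt (last (snd p)))"

definition plen :: "('v, 'e) qpath \<Rightarrow> nat" where
  "plen p = length (snd p)"

definition pverts :: "('e \<Rightarrow> 'v) \<Rightarrow> ('v, 'e) qpath \<Rightarrow> 'v set" where
  "pverts tgt p = insert (fst p) (tgt ` set (snd p))"

definition pcat :: "('e \<Rightarrow> 'v) \<Rightarrow> ('v, 'e) qpath \<Rightarrow> ('v, 'e) qpath \<Rightarrow> ('v, 'e) qpath option" where
  "pcat tgt p q = (if pend tgt p = fst q then Some (fst p, snd p @ snd q) else None)"

text \<open>The shortest path from i to j in Q (unique under condition (C)).\<close>
definition shortest_path :: "('e \<Rightarrow> 'v) \<Rightarrow> ('e \<Rightarrow> 'v) \<Rightarrow> 'v \<Rightarrow> 'v \<Rightarrow> ('v, 'e) qpath" where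
  "shortest_path src tgt i j = (THE p. valid_path src tgt p \<and> fst p = i \<and> pend tgt p = j \<and>
     (\<forall>q. valid_path src tgt q \<and> fst q = i \<and> pend tgt q = j \<longrightarrow> plen p \<le> plen q))"

definition kQ :: "('e \<Rightarrow> 'v) \<Rightarrow> ('e \<Rightarrow> 'v) \<Rightarrow> (('v, 'e) qpath \<Rightarrow> 'k::field) set" where
  "kQ src tgt = {x. finite {p. x p \<noteq> 0} \<and> (\<forall>p. x p \<noteq> 0 \<longrightarrow> valid_path src tgt p)}"

definition kQ_mult :: "('e \<Rightarrow> 'v) \<Rightarrow> (('v, 'e) qpath \<Rightarrow> 'k::field) \<Rightarrow> (('v, 'e) qpath \<Rightarrow> 'k)
    \<Rightarrow> (('v, 'e) qpath \<Rightarrow> 'k)" where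
  "kQ_mult tgt x y = (\<lambda>r. \<Sum>(p, q) \<in> {(p, q). x p \<noteq> 0 \<and> y q \<noteq> 0 \<and> pcat tgt p q = Some r}. x p * y q)"

definition kQ_one :: "('v, 'e) qpath \<Rightarrow> 'k::field" where
  "kQ_one p = (if snd p = [] then 1 else 0)"

definition pbasis :: "('v, 'e) qpath \<Rightarrow> ('v, 'e) qpath \<Rightarrow> 'k::field" where
  "pbasis p = (\<lambda>q. if q = p then 1 else 0)"

text \<open>R^m: the span of the paths of length at least m (R = arrow ideal).\<close>
definition arrow_ideal_pow :: "('e \<Rightarrow> 'v) \<Rightarrow> ('e \<Rightarrow> 'v) \<Rightarrow> nat \<Rightarrow> (('v, 'e) qpath \<Rightarrow> 'k::field) set" where
  "arrow_ideal_pow src tgt m = {x \<in> kQ src tgt. \<forall>p. x p \<noteq> 0 \<longrightarrow> m \<le> plen p}"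

text \<open>The ring Lambda (type 'a) is presented as kQ/I by a surjective ring homomorphism
  pi from kQ onto Lambda whose kernel I is admissible: R^m \<subseteq> I \<subseteq> R^2 for some m \<ge> 2.\<close>
definition bound_quiver_alg :: "('e::finite \<Rightarrow> 'v::finite) \<Rightarrow> ('e \<Rightarrow> 'v)
    \<Rightarrow> ((('v, 'e) qpath \<Rightarrow> 'k::field) \<Rightarrow> 'a::ring_1) \<Rightarrow> bool" where
  "bound_quiver_alg src tgt \<pi> \<longleftrightarrow>
     (\<forall>x \<in> kQ src tgt. \<forall>y \<in> kQ src tgt. \<pi> (\<lambda>p. x p + y p) = \<pi> x + \<pi> y) \<and>
     (\<forall>x \<in> kQ src tgt. \<forall>y \<in> kQ src tgt. \<pi> (kQ_mult tgt x y) = \<pi> x * \<pi> y) \<and>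
     \<pi> kQ_one = 1 \<and>
     \<pi> ` kQ src tgt = UNIV \<and>
     (\<exists>m \<ge> 2. arrow_ideal_pow src tgt m \<subseteq> {x \<in> kQ src tgt. \<pi> x = 0} \<and>
              {x \<in> kQ src tgt. \<pi> x = 0} \<subseteq> arrow_ideal_pow src tgt 2)"

text \<open>Images in Lambda: idempotent e_v, path classes, scalars c (= c\<cdot>1), shortest paths w^i_j.\<close>
definition ev :: "((('v, 'e) qpath \<Rightarrow> 'k::field) \<Rightarrow> 'a::ring_1) \<Rightarrow> 'v \<Rightarrow> 'a" where
  "ev \<pi> v = \<pi> (pbasis (v, []))"

definition pth :: "((('v, 'e) qpath \<Rightarrow> 'k::field) \<Rightarrow> 'a::ring_1) \<Rightarrow> ('v, 'e) qpath \<Rightarrow> 'a" where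
  "pth \<pi> p = \<pi> (pbasis p)"

definition arr :: "('e \<Rightarrow> 'v) \<Rightarrow> ((('v, 'e) qpath \<Rightarrow> 'k::field) \<Rightarrow> 'a::ring_1) \<Rightarrow> 'e \<Rightarrow> 'a" where
  "arr src \<pi> x = pth \<pi> (src x, [x])"

definition csc :: "((('v, 'e) qpath \<Rightarrow> 'k::field) \<Rightarrow> 'a::ring_1) \<Rightarrow> 'k \<Rightarrow> 'a" where
  "csc \<pi> c = \<pi> (\<lambda>p. c * kQ_one p)"

definition wpath :: "('e \<Rightarrow> 'v) \<Rightarrow> ('e \<Rightarrow> 'v) \<Rightarrow> ((('v, 'e) qpath \<Rightarrow> 'k::field) \<Rightarrow> 'a::ring_1)
    \<Rightarrow> 'v \<Rightarrow> 'v \<Rightarrow> 'a" where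
  "wpath src tgt \<pi> i j = pth \<pi> (shortest_path src tgt i j)"

definition jac_rad :: "'a::ring_1 set" where
  "jac_rad = {r. \<forall>x. \<exists>u. (1 - x * r) * u = 1 \<and> u * (1 - x * r) = 1}"

definition cond_C :: "('e::finite \<Rightarrow> 'v::finite) \<Rightarrow> ('e \<Rightarrow> 'v)
    \<Rightarrow> ((('v, 'e) qpath \<Rightarrow> 'k::field) \<Rightarrow> 'a::ring_1) \<Rightarrow> bool" where
  "cond_C src tgt \<pi> \<longleftrightarrow>
     (\<exists>\<phi> :: 'v \<Rightarrow> nat. bij_betw \<phi> UNIV {1..card (UNIV :: 'v set)} \<and>
        bij_betw (\<lambda>x. (\<phi> (src x), \<phi> (tgt x))) {x. src x \<noteq> tgt x}
          {(a, b). (1 \<le> a \<and> b = a + 1 \<and> b \<le> card (UNIV :: 'v set)) \<or> (1 \<le> b \<and> a = b + 1 \<and> a \<le> card (UNIV :: 'v set))}) \<and>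
     (\<forall>x. src x \<noteq> tgt x \<longrightarrow>
        {arr src \<pi> x * l * ev \<pi> (tgt x) | l. True} = {ev \<pi> (src x) * l * ev \<pi> (tgt x) | l. True} \<and>
        {ev \<pi> (src x) * l * ev \<pi> (tgt x) | l. True} = {ev \<pi> (src x) * l * arr src \<pi> x | l. True}) \<and>
     (\<forall>i j. wpath src tgt \<pi> i j \<noteq> 0)"

text \<open>P_t = e_t Lambda, as a right Lambda-module.\<close>
definition Pmod :: "((('v, 'e) qpath \<Rightarrow> 'k::field) \<Rightarrow> 'a::ring_1) \<Rightarrow> 'v \<Rightarrow> 'a set" where
  "Pmod \<pi> t = {ev \<pi> t * x | x. True}"

text \<open>The direct sum of the P_t, t \<in> V (V finite, as 'v is finite), as tuples.\<close>
definition DSum :: "((('v, 'e) qpath \<Rightarrow> 'k::field) \<Rightarrow> 'a::ring_1) \<Rightarrow> 'v set \<Rightarrow> ('v \<Rightarrow> 'a) set" where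
  "DSum \<pi> V = {\<phi>. \<forall>t. (t \<in> V \<longrightarrow> \<phi> t \<in> Pmod \<pi> t) \<and> (t \<notin> V \<longrightarrow> \<phi> t = 0)}"

definition factors_through :: "((('v, 'e) qpath \<Rightarrow> 'k::field) \<Rightarrow> 'a::ring_1) \<Rightarrow> ('a \<Rightarrow> 'a)
    \<Rightarrow> 'v \<Rightarrow> 'v \<Rightarrow> 'v set \<Rightarrow> bool" where
  "factors_through \<pi> f j i V \<longleftrightarrow>
     (\<exists>(h :: 'a \<Rightarrow> 'v \<Rightarrow> 'a) (g :: ('v \<Rightarrow> 'a) \<Rightarrow> 'a).
        (\<forall>x \<in> Pmod \<pi> j. h x \<in> DSum \<pi> V) \<and>
        (\<forall>x \<in> Pmod \<pi> j. \<forall>y \<in> Pmod \<pi> j. h (x + y) = (\<lambda>t. h x t + h y t)) \<and>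
        (\<forall>x \<in> Pmod \<pi> j. \<forall>c. h (x * c) = (\<lambda>t. h x t * c)) \<and>
        (\<forall>\<phi> \<in> DSum \<pi> V. g \<phi> \<in> Pmod \<pi> i) \<and>
        (\<forall>\<phi> \<in> DSum \<pi> V. \<forall>\<psi> \<in> DSum \<pi> V. g (\<lambda>t. \<phi> t + \<psi> t) = g \<phi> + g \<psi>) \<and>
        (\<forall>\<phi> \<in> DSum \<pi> V. \<forall>c. g (\<lambda>t. \<phi> t * c) = g \<phi> * c) \<and>
        (\<forall>x \<in> Pmod \<pi> j. g (h x) = f x))"

end

theory Submission
  imports Defs
begin

text \<open>
  Since the relations lie in the square of the arrow ideal \<open>R\<close>, the images \<open>\<pi>(R\<^sup>n)\<close>
  form a filtration of \<open>\<Lambda>\<close> with \<open>\<pi>(R) = rad \<Lambda>\<close>, which vanishes for large \<open>n\<close>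
  and detects the coefficients of vertices and arrows. Under (C) the quiver without
  loops is a line, so \<open>w\<^sup>i\<^sub>j\<close> is the unique geodesic and splits at every vertex
  between \<open>i\<close> and \<open>j\<close>.

  Reading (C)(b) modulo \<open>rad\<^sup>2\<close> moves radical elements across an arrow, which gives (1),
  and by induction across \<open>w\<^sup>i\<^sub>j\<close>. Every path from \<open>i\<close> to \<open>j\<close> runs through the
  first arrow of \<open>w\<^sup>i\<^sub>j\<close>, hence \<open>e\<^sub>i \<Lambda> e\<^sub>j = w\<^sup>i\<^sub>j \<Lambda>\<close>; splitting
  \<open>e\<^sub>j \<Lambda> e\<^sub>j\<close> into scalars and radical and moving the radical part across
  \<open>w\<^sup>i\<^sub>j\<close> gives (2), with uniqueness because \<open>w\<^sup>i\<^sub>j \<noteq> 0\<close> and the radical is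
  nilpotent. For (3), if \<open>t\<close> lies on \<open>w\<^sup>j\<^sub>i\<close> then \<open>f\<close> factors as
  \<open>w\<^sup>t\<^sub>j\<close> followed by \<open>(a e\<^sub>i + l) w\<^sup>i\<^sub>t\<close>; otherwise every composite
  \<open>P\<^sub>j \<rightarrow> P\<^sub>t \<rightarrow> P\<^sub>i\<close> lies in \<open>w\<^sup>i\<^sub>j rad \<Lambda>\<close>, which contains no unit multiple of
  \<open>w\<^sup>i\<^sub>j\<close>.
\<close>

section \<open>Paths\<close>

lemma valid_path_Nil [simp]: "valid_path src tgt (v, [])"
  by (simp add: valid_path_def)

lemma valid_path_Cons:
  "valid_path src tgt (v, x # xs) \<longleftrightarrow> src x = v \<and> valid_path src tgt (tgt x, xs)"
proof -
  have "(\<forall>i. Suc i < length (x # xs) \<longrightarrow> tgt ((x # xs) ! i) = src ((x # xs) ! Suc i)) \<longleftrightarrow>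
        (xs \<noteq> [] \<longrightarrow> tgt x = src (hd xs)) \<and> (\<forall>i. Suc i < length xs \<longrightarrow> tgt (xs ! i) = src (xs ! Suc i))"
    (is "?l \<longleftrightarrow> ?r")
  proof
    assume ?l
    then show ?r by (auto simp: hd_conv_nth)
  next
    assume ?r
    show ?l
    proof (intro allI impI)
      fix i assume "Suc i < length (x # xs)"
      with \<open>?r\<close> show "tgt ((x # xs) ! i) = src ((x # xs) ! Suc i)"
        by (cases i) (auto simp: hd_conv_nth)
    qed
  qed
  then show ?thesis by (auto simp: valid_path_def)
qed

lemma pend_Nil [simp]: "pend tgt (v, []) = v"
  by (simp add: pend_def)

lemma pend_Cons [simp]: "pend tgt (v, x # xs) = pend tgt (tgt x, xs)"
  by (simp add: pend_def)

lemma pend_append: "pend tgt (v, xs @ ys) = pend tgt (pend tgt (v, xs), ys)"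
  by (induction xs arbitrary: v) auto

lemma plen_Pair [simp]: "plen (v, xs) = length xs"
  by (simp add: plen_def)

lemma pverts_Nil [simp]: "pverts tgt (v, []) = {v}"
  by (simp add: pverts_def)

lemma pverts_Cons [simp]: "pverts tgt (v, x # xs) = insert v (pverts tgt (tgt x, xs))"
  by (auto simp: pverts_def)

lemma valid_path_append:
  "valid_path src tgt (v, xs @ ys) \<longleftrightarrow>
     valid_path src tgt (v, xs) \<and> valid_path src tgt (pend tgt (v, xs), ys)"
  by (induction xs arbitrary: v) (auto simp: valid_path_Cons)

lemma pcat_eq_Some_iff:
  "pcat tgt p q = Some r \<longleftrightarrow> pend tgt p = fst q \<and> r = (fst p, snd p @ snd q)"
  by (auto simp: pcat_def)

lemma valid_path_pcat:
  assumes "valid_path src tgt p" "valid_path src tgt q" "pcat tgt p q = Some r"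
  shows "valid_path src tgt r"
  using assms by (cases p) (auto simp: pcat_eq_Some_iff valid_path_append)

lemma plen_pcat: "pcat tgt p q = Some r \<Longrightarrow> plen r = plen p + plen q"
  by (auto simp: pcat_eq_Some_iff plen_def)

section \<open>The path algebra\<close>

lemma pbasis_nonzero_iff [simp]: "pbasis p q \<noteq> (0::'k::field) \<longleftrightarrow> q = p"
  by (simp add: pbasis_def)

lemma pbasis_self [simp]: "pbasis p p = 1"
  by (simp add: pbasis_def)

lemma kQ_mult_single_term:
  assumes "\<And>p q. x p \<noteq> 0 \<and> y q \<noteq> 0 \<and> pcat tgt p q = Some r \<longleftrightarrow> P \<and> p = p' \<and> q = q'"
    and "c = x p' * y q'"
  shows "kQ_mult tgt x y r = (if P then c else (0::'k::field))"
proof -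
  have "{(p, q). x p \<noteq> 0 \<and> y q \<noteq> 0 \<and> pcat tgt p q = Some r} = (if P then {(p', q')} else {})"
    using assms(1) by auto
  with assms(2) show ?thesis
    unfolding kQ_mult_def by auto
qed

lemma kQ_mult_nonzeroE:
  assumes "kQ_mult tgt x y r \<noteq> (0::'k::field)"
  obtains p q where "x p \<noteq> 0" "y q \<noteq> 0" "pcat tgt p q = Some r"
proof (rule ccontr)
  assume "\<not> thesis"
  with that have "{(p, q). x p \<noteq> 0 \<and> y q \<noteq> 0 \<and> pcat tgt p q = Some r} = {}"
    by blast
  with assms show False
    unfolding kQ_mult_def by simp
qed

lemma kQ_mult_pbasis:
  "kQ_mult tgt (pbasis p) (pbasis q) =
     (if pend tgt p = fst q then pbasis (fst p, snd p @ snd q) else (\<lambda>_. (0::'k::field)))"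
proof
  fix r
  have "kQ_mult tgt (pbasis p) (pbasis q) r =
      (if pend tgt p = fst q \<and> r = (fst p, snd p @ snd q) then 1 else (0::'k))"
    by (rule kQ_mult_single_term[where p'=p and q'=q]) (auto simp: pcat_eq_Some_iff)
  then show "kQ_mult tgt (pbasis p) (pbasis q) r =
      (if pend tgt p = fst q then pbasis (fst p, snd p @ snd q) else (\<lambda>_. 0::'k)) r"
    by (simp add: pbasis_def)
qed

lemma kQ_mult_vertex_left:
  "kQ_mult tgt (pbasis (u, [])) y = (\<lambda>r. if fst r = u then y r else (0::'k::field))"
proof
  fix r
  have "kQ_mult tgt (pbasis (u, [])) y r = (if fst r = u \<and> y r \<noteq> 0 then y r else 0)"
  proof (rule kQ_mult_single_term)
    show "pbasis (u, []) p \<noteq> (0::'k) \<and> y q \<noteq> 0 \<and> pcat tgt p q = Some r \<longleftrightarrow>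
        (fst r = u \<and> y r \<noteq> 0) \<and> p = (u, []) \<and> q = r" for p q
      by (auto simp: pcat_def)
  qed simp
  then show "kQ_mult tgt (pbasis (u, [])) y r = (if fst r = u then y r else 0)"
    by auto
qed

lemma kQ_mult_vertex_right:
  "kQ_mult tgt y (pbasis (u, [])) = (\<lambda>r. if pend tgt r = u then y r else (0::'k::field))"
proof
  fix r
  have "kQ_mult tgt y (pbasis (u, [])) r = (if pend tgt r = u \<and> y r \<noteq> 0 then y r else 0)"
  proof (rule kQ_mult_single_term)
    show "y p \<noteq> 0 \<and> pbasis (u, []) q \<noteq> (0::'k) \<and> pcat tgt p q = Some r \<longleftrightarrow>
        (pend tgt r = u \<and> y r \<noteq> 0) \<and> p = r \<and> q = (u, [])" for p q
      by (cases p) (auto simp: pcat_def)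
  qed simp
  then show "kQ_mult tgt y (pbasis (u, [])) r = (if pend tgt r = u then y r else 0)"
    by auto
qed

lemma kQ_mult_scalar_left: "kQ_mult tgt (\<lambda>p. c * kQ_one p) y = (\<lambda>r. c * y r :: 'k::field)"
proof
  fix r
  have "kQ_mult tgt (\<lambda>p. c * kQ_one p) y r = (if c \<noteq> 0 \<and> y r \<noteq> 0 then c * y r else 0)"
  proof (rule kQ_mult_single_term)
    show "c * kQ_one p \<noteq> 0 \<and> y q \<noteq> 0 \<and> pcat tgt p q = Some r \<longleftrightarrow>
        (c \<noteq> 0 \<and> y r \<noteq> 0) \<and> p = (fst r, []) \<and> q = r" for p q
      by (cases p) (auto simp: kQ_one_def pcat_def)
  qed (simp add: kQ_one_def)
  then show "kQ_mult tgt (\<lambda>p. c * kQ_one p) y r = c * y r"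
    by auto
qed

lemma kQ_mult_scalar_right: "kQ_mult tgt y (\<lambda>p. c * kQ_one p) = (\<lambda>r. y r * c :: 'k::field)"
proof
  fix r
  have "kQ_mult tgt y (\<lambda>p. c * kQ_one p) r = (if c \<noteq> 0 \<and> y r \<noteq> 0 then y r * c else 0)"
  proof (rule kQ_mult_single_term)
    show "y p \<noteq> 0 \<and> c * kQ_one q \<noteq> 0 \<and> pcat tgt p q = Some r \<longleftrightarrow>
        (c \<noteq> 0 \<and> y r \<noteq> 0) \<and> p = r \<and> q = (pend tgt r, [])" for p q
      by (cases q) (auto simp: kQ_one_def pcat_def)
  qed (simp add: kQ_one_def)
  then show "kQ_mult tgt y (\<lambda>p. c * kQ_one p) r = y r * c"
    by auto
qed

lemma kQ_mult_closed:
  assumes "x \<in> kQ src tgt" "y \<in> kQ src tgt"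
  shows "kQ_mult tgt x y \<in> (kQ src tgt :: (('v, 'e) qpath \<Rightarrow> 'k::field) set)"
proof -
  let ?cat = "\<lambda>(p, q). (fst p, snd p @ snd q)"
  have "{r. kQ_mult tgt x y r \<noteq> 0} \<subseteq> ?cat ` ({p. x p \<noteq> 0} \<times> {q. y q \<noteq> 0})"
  proof
    fix r assume "r \<in> {r. kQ_mult tgt x y r \<noteq> 0}"
    then obtain p q where "x p \<noteq> 0" "y q \<noteq> 0" "pcat tgt p q = Some r"
      by (auto elim: kQ_mult_nonzeroE)
    then show "r \<in> ?cat ` ({p. x p \<noteq> 0} \<times> {q. y q \<noteq> 0})"
      by (auto simp: pcat_eq_Some_iff)
  qed
  moreover have "finite {p. x p \<noteq> 0}" "finite {q. y q \<noteq> 0}"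
    using assms unfolding kQ_def by blast+
  ultimately have "finite {r. kQ_mult tgt x y r \<noteq> 0}"
    by (meson finite_SigmaI finite_imageI finite_subset)
  moreover have "\<forall>r. kQ_mult tgt x y r \<noteq> 0 \<longrightarrow> valid_path src tgt r"
  proof (intro allI impI)
    fix r assume "kQ_mult tgt x y r \<noteq> 0"
    then obtain p q where pq: "x p \<noteq> 0" "y q \<noteq> 0" "pcat tgt p q = Some r"
      by (auto elim: kQ_mult_nonzeroE)
    with assms have "valid_path src tgt p" "valid_path src tgt q"
      unfolding kQ_def by blast+
    with pq(3) show "valid_path src tgt r"
      by (blast intro: valid_path_pcat)
  qed
  ultimately show ?thesis
    unfolding kQ_def by blast
qed

lemma kQ_add_closed:
  assumes "x \<in> kQ src tgt" "y \<in> kQ src tgt"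
  shows "(\<lambda>p. x p + y p) \<in> (kQ src tgt :: (('v, 'e) qpath \<Rightarrow> 'k::field) set)"
proof -
  have "{p. x p + y p \<noteq> 0} \<subseteq> {p. x p \<noteq> 0} \<union> {p. y p \<noteq> 0}"
    by auto
  moreover have "finite ({p. x p \<noteq> 0} \<union> {p. y p \<noteq> 0})"
    using assms unfolding kQ_def by blast
  ultimately have "finite {p. x p + y p \<noteq> 0}"
    by (rule finite_subset)
  moreover have "\<forall>p. x p + y p \<noteq> 0 \<longrightarrow> valid_path src tgt p"
  proof (intro allI impI)
    fix p assume "x p + y p \<noteq> 0"
    then have "x p \<noteq> 0 \<or> y p \<noteq> 0"
      by auto
    then show "valid_path src tgt p"
      using assms unfolding kQ_def by blast
  qed
  ultimately show ?thesis
    unfolding kQ_def by blast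
qed

lemma kQ_uminus_closed: "x \<in> kQ src tgt \<Longrightarrow> (\<lambda>p. - x p) \<in> kQ src tgt"
  by (simp add: kQ_def)

lemma kQ_zero: "(\<lambda>p. 0) \<in> kQ src tgt"
  by (simp add: kQ_def)

lemma pbasis_in_kQ: "valid_path src tgt p \<Longrightarrow> pbasis p \<in> (kQ src tgt :: (_ \<Rightarrow> 'k::field) set)"
  by (simp add: kQ_def)

lemma scaled_pbasis_in_kQ:
  assumes "valid_path src tgt p"
  shows "(\<lambda>r. c * pbasis p r) \<in> (kQ src tgt :: (_ \<Rightarrow> 'k::field) set)"
proof -
  have "{r. c * pbasis p r \<noteq> (0::'k)} \<subseteq> {p}"
    by auto
  then have "finite {r. c * pbasis p r \<noteq> (0::'k)}"
    by (rule finite_subset) simp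
  with assms show ?thesis
    unfolding kQ_def by auto
qed

lemma scalar_in_kQ: "(\<lambda>p. c * kQ_one p) \<in> (kQ src tgt :: (('v::finite, 'e) qpath \<Rightarrow> 'k::field) set)"
proof -
  have "{p::('v, 'e) qpath. c * kQ_one p \<noteq> (0::'k)} \<subseteq> range (\<lambda>v. (v, []))"
  proof
    fix p :: "('v, 'e) qpath"
    assume "p \<in> {p. c * kQ_one p \<noteq> 0}"
    then have "snd p = []"
      by (auto simp: kQ_one_def split: if_splits)
    then show "p \<in> range (\<lambda>v. (v, []))"
      by (metis prod.collapse rangeI)
  qed
  then have "finite {p::('v, 'e) qpath. c * kQ_one p \<noteq> (0::'k)}"
    by (rule finite_subset) simp
  moreover have "valid_path src tgt p" if "c * kQ_one p \<noteq> 0" for p :: "('v, 'e) qpath"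
    using that by (cases p) (auto simp: kQ_one_def split: if_splits)
  ultimately show ?thesis
    unfolding kQ_def by blast
qed

lemma drop_trivial_paths_in_arrow_ideal:
  assumes x: "x \<in> kQ src tgt"
  shows "(\<lambda>r. if snd r = [] then 0 else x r) \<in> (arrow_ideal_pow src tgt 1 :: (_ \<Rightarrow> 'k::field) set)"
proof -
  let ?z = "\<lambda>r. if snd r = [] then 0 else x r"
  have nonzero: "?z r \<noteq> 0 \<Longrightarrow> x r \<noteq> 0 \<and> snd r \<noteq> []" for r
    by (auto split: if_splits)
  then have "{r. ?z r \<noteq> 0} \<subseteq> {r. x r \<noteq> 0}"
    by blast
  moreover have "finite {r. x r \<noteq> 0}"
    using x unfolding kQ_def by blast
  ultimately have "finite {r. ?z r \<noteq> 0}"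
    by (rule finite_subset)
  moreover have "\<forall>r. ?z r \<noteq> 0 \<longrightarrow> valid_path src tgt r"
    using nonzero x unfolding kQ_def by blast
  moreover have "\<forall>r. ?z r \<noteq> 0 \<longrightarrow> 1 \<le> plen r"
    using nonzero unfolding plen_def by (simp add: Suc_leI)
  ultimately show ?thesis
    unfolding kQ_def arrow_ideal_pow_def by blast
qed

lemma split_off_trivial_path:
  fixes x :: "('v, 'e) qpath \<Rightarrow> 'k::field"
  assumes "\<And>u. u \<noteq> v \<Longrightarrow> x (u, []) = 0"
  shows "x = (\<lambda>r. (if snd r = [] then 0 else x r) + x (v, []) * pbasis (v, []) r)"
proof
  fix r :: "('v, 'e) qpath"
  obtain a b where r: "r = (a, b)"
    by (cases r)
  show "x r = (if snd r = [] then 0 else x r) + x (v, []) * pbasis (v, []) r"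
    using assms unfolding r by (cases b) (auto simp: pbasis_def)
qed

lemma arrow_ideal_pow_0: "arrow_ideal_pow src tgt 0 = kQ src tgt"
  by (simp add: arrow_ideal_pow_def)

lemma arrow_ideal_pow_antimono: "a \<le> b \<Longrightarrow> arrow_ideal_pow src tgt b \<subseteq> arrow_ideal_pow src tgt a"
  unfolding arrow_ideal_pow_def using order_trans by blast

lemma arrow_ideal_pow_mult:
  assumes "x \<in> arrow_ideal_pow src tgt a" "y \<in> arrow_ideal_pow src tgt b"
  shows "kQ_mult tgt x y \<in> (arrow_ideal_pow src tgt (a + b) :: (_ \<Rightarrow> 'k::field) set)"
proof -
  have "kQ_mult tgt x y \<in> kQ src tgt"
    using assms kQ_mult_closed unfolding arrow_ideal_pow_def by blast
  moreover have "\<forall>r. kQ_mult tgt x y r \<noteq> 0 \<longrightarrow> a + b \<le> plen r"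
  proof (intro allI impI)
    fix r assume "kQ_mult tgt x y r \<noteq> 0"
    then obtain p q where pq: "x p \<noteq> 0" "y q \<noteq> 0" "pcat tgt p q = Some r"
      by (auto elim: kQ_mult_nonzeroE)
    with assms have "a \<le> plen p" "b \<le> plen q"
      unfolding arrow_ideal_pow_def by blast+
    with plen_pcat[OF pq(3)] show "a + b \<le> plen r"
      by simp
  qed
  ultimately show ?thesis
    unfolding arrow_ideal_pow_def by blast
qed

lemma arrow_ideal_pow_add:
  assumes "x \<in> arrow_ideal_pow src tgt m" "y \<in> arrow_ideal_pow src tgt m"
  shows "(\<lambda>p. x p + y p) \<in> (arrow_ideal_pow src tgt m :: (_ \<Rightarrow> 'k::field) set)"
proof -
  have "(\<lambda>p. x p + y p) \<in> kQ src tgt"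
    using assms kQ_add_closed unfolding arrow_ideal_pow_def by blast
  moreover have "\<forall>p. x p + y p \<noteq> 0 \<longrightarrow> m \<le> plen p"
  proof (intro allI impI)
    fix p assume "x p + y p \<noteq> 0"
    then have "x p \<noteq> 0 \<or> y p \<noteq> 0"
      by auto
    then show "m \<le> plen p"
      using assms unfolding arrow_ideal_pow_def by blast
  qed
  ultimately show ?thesis
    unfolding arrow_ideal_pow_def by blast
qed

lemma arrow_ideal_pow_uminus:
  "x \<in> arrow_ideal_pow src tgt m \<Longrightarrow> (\<lambda>p. - x p) \<in> arrow_ideal_pow src tgt m"
  by (simp add: arrow_ideal_pow_def kQ_def)

lemma arrow_ideal_pow_zero: "(\<lambda>p. 0) \<in> arrow_ideal_pow src tgt m"
  by (simp add: arrow_ideal_pow_def kQ_def)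

lemma pbasis_in_arrow_ideal_pow:
  "valid_path src tgt p \<Longrightarrow> m \<le> plen p \<Longrightarrow>
    pbasis p \<in> (arrow_ideal_pow src tgt m :: (_ \<Rightarrow> 'k::field) set)"
  using pbasis_in_kQ[of src tgt p] by (cases p) (simp add: arrow_ideal_pow_def)

lemma nilpotent_imp_one_minus_unit:
  fixes y :: "'a::ring_1"
  assumes "y ^ n = 0"
  shows "\<exists>u. (1 - y) * u = 1 \<and> u * (1 - y) = 1"
proof -
  have left: "(1 - y) * (\<Sum>i<m. y ^ i) = 1 - y ^ m" for m
  proof (induction m)
    case (Suc m)
    have "(1 - y) * (\<Sum>i<Suc m. y ^ i) = (1 - y) * (\<Sum>i<m. y ^ i) + (1 - y) * y ^ m"
      by (simp add: distrib_left)
    also have "\<dots> = 1 - y ^ Suc m"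
      using Suc by (simp add: algebra_simps)
    finally show ?case .
  qed simp
  have "y * (\<Sum>i<n. y ^ i) = (\<Sum>i<n. y ^ i) * y"
    by (simp add: sum_distrib_left sum_distrib_right power_commutes)
  then have "(1 - y) * (\<Sum>i<n. y ^ i) = (\<Sum>i<n. y ^ i) * (1 - y)"
    by (simp add: algebra_simps)
  with left[of n] assms show ?thesis
    by auto
qed


section \<open>The radical filtration of a bound quiver algebra\<close>

locale bound_quiver =
  fixes src tgt :: "'e::finite \<Rightarrow> 'v::finite"
    and \<pi> :: "(('v, 'e) qpath \<Rightarrow> 'k::field) \<Rightarrow> 'a::ring_1"
  assumes bound_quiver_alg: "bound_quiver_alg src tgt \<pi>"
begin

abbreviation KQ :: "(('v, 'e) qpath \<Rightarrow> 'k) set" where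
  "KQ \<equiv> kQ src tgt"

abbreviation E :: "'v \<Rightarrow> 'a" where
  "E \<equiv> ev \<pi>"

abbreviation P :: "('v, 'e) qpath \<Rightarrow> 'a" where
  "P \<equiv> pth \<pi>"

abbreviation cs :: "'k \<Rightarrow> 'a" where
  "cs \<equiv> csc \<pi>"

definition rad_pow :: "nat \<Rightarrow> 'a set" where
  "rad_pow n = \<pi> ` arrow_ideal_pow src tgt n"

lemma bound_quiver_alg_unfolded:
  "(\<forall>x \<in> KQ. \<forall>y \<in> KQ. \<pi> (\<lambda>p. x p + y p) = \<pi> x + \<pi> y) \<and>
   (\<forall>x \<in> KQ. \<forall>y \<in> KQ. \<pi> (kQ_mult tgt x y) = \<pi> x * \<pi> y) \<and>
   \<pi> kQ_one = 1 \<and> \<pi> ` KQ = UNIV \<and>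
   (\<exists>m \<ge> 2. arrow_ideal_pow src tgt m \<subseteq> {x \<in> KQ. \<pi> x = 0} \<and>
      {x \<in> KQ. \<pi> x = 0} \<subseteq> arrow_ideal_pow src tgt 2)"
  using bound_quiver_alg unfolding bound_quiver_alg_def .

lemma pi_add: "x \<in> KQ \<Longrightarrow> y \<in> KQ \<Longrightarrow> \<pi> (\<lambda>p. x p + y p) = \<pi> x + \<pi> y"
  using bound_quiver_alg_unfolded by blast

lemma pi_mult: "x \<in> KQ \<Longrightarrow> y \<in> KQ \<Longrightarrow> \<pi> (kQ_mult tgt x y) = \<pi> x * \<pi> y"
  using bound_quiver_alg_unfolded by blast

lemma pi_image: "\<pi> ` KQ = UNIV"
  using bound_quiver_alg_unfolded by blast

lemma pi_surj: obtains x where "x \<in> KQ" "\<pi> x = u"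
  using pi_image by (metis UNIV_I imageE)

lemma arrow_ideal_pow_in_kernel: "\<exists>m. arrow_ideal_pow src tgt m \<subseteq> {x \<in> KQ. \<pi> x = 0}"
  using bound_quiver_alg_unfolded by blast

lemma kernel_subset_arrow_ideal_pow_2: "{x \<in> KQ. \<pi> x = 0} \<subseteq> arrow_ideal_pow src tgt 2"
  using bound_quiver_alg_unfolded by blast

lemma pi_zero: "\<pi> (\<lambda>p. 0) = 0"
  using pi_add[OF kQ_zero kQ_zero] by simp

lemma pi_uminus: "x \<in> KQ \<Longrightarrow> \<pi> (\<lambda>p. - x p) = - \<pi> x"
  using pi_add[OF kQ_uminus_closed, of x x] pi_zero by (simp add: eq_neg_iff_add_eq_0)

lemma pi_diff: "x \<in> KQ \<Longrightarrow> y \<in> KQ \<Longrightarrow> \<pi> (\<lambda>p. x p - y p) = \<pi> x - \<pi> y"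
  using pi_add[OF _ kQ_uminus_closed, of x y] pi_uminus[of y] by simp

lemma pi_eq_imp_short_coeff_eq:
  assumes "x \<in> KQ" "y \<in> KQ" "\<pi> x = \<pi> y" "plen p \<le> 1"
  shows "x p = y p"
proof -
  have "(\<lambda>p. x p - y p) \<in> KQ"
    using assms(1,2) kQ_add_closed kQ_uminus_closed by fastforce
  with assms(1-3) kernel_subset_arrow_ideal_pow_2 have "(\<lambda>p. x p - y p) \<in> arrow_ideal_pow src tgt 2"
    by (auto simp: pi_diff)
  with assms(4) show ?thesis
    unfolding arrow_ideal_pow_def by fastforce
qed

lemma rad_pow_0: "rad_pow 0 = UNIV"
  unfolding rad_pow_def arrow_ideal_pow_0 by (rule pi_image)

lemma rad_pow_mult:
  assumes "u \<in> rad_pow a" "v \<in> rad_pow b"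
  shows "u * v \<in> rad_pow (a + b)"
proof -
  obtain x y where x: "x \<in> arrow_ideal_pow src tgt a" "u = \<pi> x"
    and y: "y \<in> arrow_ideal_pow src tgt b" "v = \<pi> y"
    using assms unfolding rad_pow_def by blast
  have "u * v = \<pi> (kQ_mult tgt x y)"
    using x y pi_mult unfolding arrow_ideal_pow_def by simp
  with arrow_ideal_pow_mult[OF x(1) y(1)] show ?thesis
    unfolding rad_pow_def by blast
qed

lemma rad_pow_add:
  assumes "u \<in> rad_pow a" "v \<in> rad_pow a"
  shows "u + v \<in> rad_pow a"
proof -
  obtain x y where x: "x \<in> arrow_ideal_pow src tgt a" "u = \<pi> x"
    and y: "y \<in> arrow_ideal_pow src tgt a" "v = \<pi> y"
    using assms unfolding rad_pow_def by blast
  have "u + v = \<pi> (\<lambda>p. x p + y p)"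
    using x y pi_add unfolding arrow_ideal_pow_def by simp
  with arrow_ideal_pow_add[OF x(1) y(1)] show ?thesis
    unfolding rad_pow_def by blast
qed

lemma rad_pow_uminus:
  assumes "u \<in> rad_pow a"
  shows "- u \<in> rad_pow a"
proof -
  obtain x where x: "x \<in> arrow_ideal_pow src tgt a" "u = \<pi> x"
    using assms unfolding rad_pow_def by blast
  have "- u = \<pi> (\<lambda>p. - x p)"
    using x pi_uminus unfolding arrow_ideal_pow_def by simp
  with arrow_ideal_pow_uminus[OF x(1)] show ?thesis
    unfolding rad_pow_def by blast
qed

lemma rad_pow_diff: "u \<in> rad_pow a \<Longrightarrow> v \<in> rad_pow a \<Longrightarrow> u - v \<in> rad_pow a"
  using rad_pow_add[OF _ rad_pow_uminus, of u a v] by simp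

lemma zero_in_rad_pow: "0 \<in> rad_pow a"
  unfolding rad_pow_def using arrow_ideal_pow_zero pi_zero by (metis image_eqI)

lemma rad_pow_antimono: "a \<le> b \<Longrightarrow> rad_pow b \<subseteq> rad_pow a"
  unfolding rad_pow_def by (rule image_mono) (rule arrow_ideal_pow_antimono)

lemma rad_pow_mult_left: "u \<in> rad_pow a \<Longrightarrow> x * u \<in> rad_pow a"
  using rad_pow_mult[of x 0 u a] rad_pow_0 by simp

lemma rad_pow_mult_right: "u \<in> rad_pow a \<Longrightarrow> u * x \<in> rad_pow a"
  using rad_pow_mult[of u a x 0] rad_pow_0 by simp

lemma rad_pow_mult_1_1: "u \<in> rad_pow 1 \<Longrightarrow> v \<in> rad_pow 1 \<Longrightarrow> u * v \<in> rad_pow 2"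
  using rad_pow_mult[of u 1 v 1] by (simp add: numeral_2_eq_2)

lemma rad_pow_eventually_zero: obtains m where "\<And>k. m \<le> k \<Longrightarrow> rad_pow k = {0}"
proof -
  obtain m where "arrow_ideal_pow src tgt m \<subseteq> {x \<in> KQ. \<pi> x = 0}"
    using arrow_ideal_pow_in_kernel by blast
  then have "rad_pow m \<subseteq> {0}"
    unfolding rad_pow_def image_subset_iff by auto
  then have "rad_pow k = {0}" if "m \<le> k" for k
    using rad_pow_antimono[OF that] zero_in_rad_pow[of k] by auto
  then show thesis
    by (rule that)
qed

lemma rad_pow_all_imp_zero:
  assumes "\<And>k. u \<in> rad_pow k"
  shows "u = 0"
proof -
  obtain m where "\<And>k. m \<le> k \<Longrightarrow> rad_pow k = {0}"
    using rad_pow_eventually_zero by blast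
  then have "rad_pow m = {0}"
    by simp
  with assms[of m] show ?thesis
    by simp
qed

lemma rad_fixed_left_eq_0: "r \<in> rad_pow 1 \<Longrightarrow> u = r * u \<Longrightarrow> u = 0"
proof (rule rad_pow_all_imp_zero)
  fix k assume r: "r \<in> rad_pow 1" and u: "u = r * u"
  show "u \<in> rad_pow k"
  proof (induction k)
    case (Suc k)
    then show ?case
      using rad_pow_mult[OF r Suc] u by simp
  qed (simp add: rad_pow_0)
qed

lemma rad_fixed_right_eq_0: "r \<in> rad_pow 1 \<Longrightarrow> u = u * r \<Longrightarrow> u = 0"
proof (rule rad_pow_all_imp_zero)
  fix k assume r: "r \<in> rad_pow 1" and u: "u = u * r"
  show "u \<in> rad_pow k"
  proof (induction k)
    case (Suc k)
    then show ?case
      using rad_pow_mult[OF Suc r] u by simp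
  qed (simp add: rad_pow_0)
qed

lemma power_in_rad_pow: "y \<in> rad_pow 1 \<Longrightarrow> y ^ k \<in> rad_pow k"
proof (induction k)
  case (Suc k)
  then show ?case
    using rad_pow_mult[of y 1 "y ^ k" k] by simp
qed (simp add: rad_pow_0)

lemma rad_pow_1_subset_jac_rad: "rad_pow 1 \<subseteq> jac_rad"
proof
  fix r assume r: "r \<in> rad_pow 1"
  obtain m where m: "\<And>k. m \<le> k \<Longrightarrow> rad_pow k = {0}"
    using rad_pow_eventually_zero by blast
  have "(x * r) ^ m = 0" for x
    using power_in_rad_pow[OF rad_pow_mult_left[OF r], of x m] m[of m] by blast
  then show "r \<in> jac_rad"
    unfolding jac_rad_def using nilpotent_imp_one_minus_unit by blast
qed

lemma ev_eq_pth: "E v = P (v, [])"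
  unfolding ev_def pth_def ..

lemma pth_append:
  assumes "valid_path src tgt p" "valid_path src tgt q" "pend tgt p = fst q"
  shows "P (fst p, snd p @ snd q) = P p * P q"
proof -
  have "P p * P q = \<pi> (kQ_mult tgt (pbasis p) (pbasis q))"
    unfolding pth_def using pi_mult[OF pbasis_in_kQ pbasis_in_kQ] assms by simp
  with assms(3) show ?thesis
    unfolding pth_def kQ_mult_pbasis by simp
qed

lemma ev_mult_ev: "E u * E v = (if u = v then E u else 0)"
proof -
  have "E u * E v = \<pi> (kQ_mult tgt (pbasis (u, [])) (pbasis (v, [])))"
    unfolding ev_def using pi_mult pbasis_in_kQ valid_path_Nil by metis
  then show ?thesis
    unfolding kQ_mult_pbasis ev_def using pi_zero by simp
qed

lemma ev_idem [simp]: "E v * E v = E v"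
  using ev_mult_ev by simp

lemma ev_idem_left [simp]: "E v * (E v * z) = E v * z"
  by (simp flip: mult.assoc)

lemma corner_ev_left: "E v * l * E v = l \<Longrightarrow> E v * l = l"
  by (metis ev_idem_left mult.assoc)

lemma corner_ev_right: "E v * l * E v = l \<Longrightarrow> l * E v = l"
  by (metis ev_idem mult.assoc)

lemma ev_pth: "valid_path src tgt p \<Longrightarrow> E (fst p) * P p = P p"
  using pth_append[of "(fst p, [])" p] ev_eq_pth by simp

lemma pth_ev: "valid_path src tgt p \<Longrightarrow> P p * E (pend tgt p) = P p"
  using pth_append[of p "(pend tgt p, [])"] ev_eq_pth by simp

lemma pth_in_rad_pow: "valid_path src tgt p \<Longrightarrow> n \<le> plen p \<Longrightarrow> P p \<in> rad_pow n"
  unfolding pth_def rad_pow_def using pbasis_in_arrow_ideal_pow by blast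

lemma csc_mult_pi: "x \<in> KQ \<Longrightarrow> cs c * \<pi> x = \<pi> (\<lambda>r. c * x r)"
  unfolding csc_def using pi_mult[OF scalar_in_kQ, of x c] by (simp add: kQ_mult_scalar_left)

lemma pi_mult_csc: "x \<in> KQ \<Longrightarrow> \<pi> x * cs c = \<pi> (\<lambda>r. x r * c)"
  unfolding csc_def using pi_mult[OF _ scalar_in_kQ, of x c] by (simp add: kQ_mult_scalar_right)

lemma csc_commute: "cs c * u = u * cs c"
proof -
  obtain x where x: "x \<in> KQ" "\<pi> x = u"
    by (rule pi_surj)
  have "(\<lambda>r. c * x r) = (\<lambda>r. x r * c)"
    by (simp add: mult.commute)
  with x show ?thesis
    by (auto simp: csc_mult_pi pi_mult_csc)
qed

lemma csc_add: "cs (a + b) = cs a + cs b"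
  unfolding csc_def using pi_add[OF scalar_in_kQ scalar_in_kQ] by (simp add: distrib_right)

lemma csc_mult: "cs a * cs b = cs (a * b)"
  using csc_mult_pi[OF scalar_in_kQ, of a b] unfolding csc_def by (simp add: mult.assoc)

lemma csc_one: "cs 1 = 1"
  unfolding csc_def using bound_quiver_alg_unfolded by simp

lemma csc_zero: "cs 0 = 0"
  unfolding csc_def using pi_zero by simp

lemma csc_diff: "cs (a - b) = cs a - cs b"
  using csc_add[of "a - b" b] by (simp add: algebra_simps)

lemma csc_inverse_cancel: "c \<noteq> 0 \<Longrightarrow> cs (inverse c) * cs c = 1"
  by (simp add: csc_mult csc_one)

lemma pi_scaled_pbasis: "valid_path src tgt p \<Longrightarrow> \<pi> (\<lambda>r. c * pbasis p r) = cs c * P p"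
  unfolding pth_def using csc_mult_pi pbasis_in_kQ by metis

lemma scaled_short_path_in_rad_pow_imp_zero:
  assumes "valid_path src tgt p" "plen p \<le> 1" "cs c * P p \<in> rad_pow (Suc (plen p))"
  shows "c = 0"
proof -
  obtain z where z: "z \<in> arrow_ideal_pow src tgt (Suc (plen p))" "cs c * P p = \<pi> z"
    using assms(3) unfolding rad_pow_def by blast
  then have "z \<in> KQ"
    unfolding arrow_ideal_pow_def by blast
  have "(\<lambda>r. c * pbasis p r) p = z p"
    using z assms pi_scaled_pbasis
    by (intro pi_eq_imp_short_coeff_eq[OF scaled_pbasis_in_kQ[OF assms(1)] \<open>z \<in> KQ\<close>]) auto
  moreover have "z p = 0"
    using z unfolding arrow_ideal_pow_def by fastforce
  ultimately show ?thesis
    by simp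
qed

lemma scaled_ev_in_rad_imp_zero: "cs c * E v \<in> rad_pow 1 \<Longrightarrow> c = 0"
  using scaled_short_path_in_rad_pow_imp_zero[of "(v, [])" c] ev_eq_pth by simp

lemma corner_restrict_in_kQ:
  assumes x: "x \<in> KQ"
  shows "(\<lambda>r. if fst r = i \<and> pend tgt r = j then x r else 0) \<in> KQ"
proof -
  let ?z = "\<lambda>r. if fst r = i \<and> pend tgt r = j then x r else 0"
  have "{r. ?z r \<noteq> 0} \<subseteq> {r. x r \<noteq> 0}"
    by auto
  moreover have "finite {r. x r \<noteq> 0}" and valid: "\<forall>r. x r \<noteq> 0 \<longrightarrow> valid_path src tgt r"
    using x unfolding kQ_def by blast+
  ultimately have "finite {r. ?z r \<noteq> 0}"
    using finite_subset by blast
  moreover have "\<forall>r. ?z r \<noteq> 0 \<longrightarrow> valid_path src tgt r"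
    using valid by simp
  ultimately show ?thesis
    unfolding kQ_def by blast
qed

lemma pi_corner_restrict:
  assumes x: "x \<in> KQ"
  shows "\<pi> (\<lambda>r. if fst r = i \<and> pend tgt r = j then x r else 0) = E i * \<pi> x * E j"
proof -
  have ei: "pbasis (i, []) \<in> KQ" and ej: "pbasis (j, []) \<in> KQ"
    by (simp_all add: pbasis_in_kQ)
  have "(\<lambda>r. if fst r = i \<and> pend tgt r = j then x r else 0) =
      kQ_mult tgt (pbasis (i, [])) (kQ_mult tgt x (pbasis (j, [])))"
    by (auto simp: kQ_mult_vertex_left kQ_mult_vertex_right)
  then show ?thesis
    using pi_mult[OF ei kQ_mult_closed[OF x ej]] pi_mult[OF x ej]
    unfolding ev_def by (simp add: mult.assoc)
qed

lemma pi_in_additive_set: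
  assumes x: "x \<in> KQ" and "0 \<in> T" and add: "\<And>a b. a \<in> T \<Longrightarrow> b \<in> T \<Longrightarrow> a + b \<in> T"
    and terms: "\<And>p. x p \<noteq> 0 \<Longrightarrow> cs (x p) * P p \<in> T"
  shows "\<pi> x \<in> T"
proof -
  have valid: "x p \<noteq> 0 \<Longrightarrow> valid_path src tgt p" for p
    using x unfolding kQ_def by blast
  have "(\<lambda>r. if r \<in> F then x r else 0) \<in> KQ \<and> \<pi> (\<lambda>r. if r \<in> F then x r else 0) \<in> T"
    if "finite F" "F \<subseteq> {p. x p \<noteq> 0}" for F
    using that
  proof (induction F rule: finite_induct)
    case empty
    then show ?case
      using pi_zero kQ_zero \<open>0 \<in> T\<close> by simp
  next
    case (insert p F)
    then have xp: "x p \<noteq> 0" and IH: "(\<lambda>r. if r \<in> F then x r else 0) \<in> KQ"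
        "\<pi> (\<lambda>r. if r \<in> F then x r else 0) \<in> T"
      by blast+
    have split: "(\<lambda>r. if r \<in> insert p F then x r else 0) =
        (\<lambda>r. (if r \<in> F then x r else 0) + x p * pbasis p r)"
      using insert.hyps(2) by (auto simp: pbasis_def)
    have p_in: "(\<lambda>r. x p * pbasis p r) \<in> KQ"
      using scaled_pbasis_in_kQ[OF valid[OF xp]] .
    show ?case
      unfolding split using pi_add[OF IH(1) p_in] kQ_add_closed[OF IH(1) p_in]
        add[OF IH(2) terms[OF xp]] pi_scaled_pbasis[OF valid[OF xp]] by simp
  qed
  moreover have "finite {p. x p \<noteq> 0}"
    using x unfolding kQ_def by blast
  ultimately have "\<pi> (\<lambda>r. if r \<in> {p. x p \<noteq> 0} then x r else 0) \<in> T"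
    by blast
  moreover have "(\<lambda>r. if r \<in> {p. x p \<noteq> 0} then x r else 0) = x"
    by auto
  ultimately show ?thesis
    by simp
qed

lemma corner_in_additive_set:
  assumes "0 \<in> T" "\<And>a b. a \<in> T \<Longrightarrow> b \<in> T \<Longrightarrow> a + b \<in> T"
    and "\<And>p c. valid_path src tgt p \<Longrightarrow> fst p = i \<Longrightarrow> pend tgt p = j \<Longrightarrow> cs c * P p \<in> T"
  shows "E i * y * E j \<in> T"
proof -
  obtain x where x: "x \<in> KQ" "\<pi> x = y"
    by (rule pi_surj)
  let ?z = "\<lambda>r. if fst r = i \<and> pend tgt r = j then x r else 0"
  have "\<pi> ?z \<in> T"
  proof (rule pi_in_additive_set[OF corner_restrict_in_kQ[OF x(1)] assms(1,2)])
    fix p assume "?z p \<noteq> 0"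
    moreover from this have "x p \<noteq> 0"
      by (simp split: if_splits)
    with x(1) have "valid_path src tgt p"
      unfolding kQ_def by blast
    ultimately show "cs (?z p) * P p \<in> T"
      using assms(3) by (auto split: if_splits)
  qed
  with x show ?thesis
    by (simp add: pi_corner_restrict)
qed

lemma corner_decomposition_pi:
  assumes x: "x \<in> KQ"
  obtains r where "r \<in> rad_pow 1" "E v * r * E v = r" "E v * \<pi> x * E v = cs (x (v, [])) * E v + r"
proof -
  define z where "z = (\<lambda>r. if fst r = v \<and> pend tgt r = v then x r else 0)"
  define z1 where "z1 = (\<lambda>r. if snd r = [] then 0 else z r)"
  have z_in: "z \<in> KQ"
    unfolding z_def using corner_restrict_in_kQ[OF x] .
  have "z1 \<in> arrow_ideal_pow src tgt 1"
    unfolding z1_def using drop_trivial_paths_in_arrow_ideal[OF z_in] .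
  then have z1_rad: "\<pi> z1 \<in> rad_pow 1" and z1_in: "z1 \<in> KQ"
    unfolding rad_pow_def arrow_ideal_pow_def by blast+
  have "z = (\<lambda>r. z1 r + z (v, []) * pbasis (v, []) r)"
    unfolding z1_def by (rule split_off_trivial_path) (simp add: z_def)
  moreover have "z (v, []) = x (v, [])"
    by (simp add: z_def)
  ultimately have "z = (\<lambda>r. z1 r + x (v, []) * pbasis (v, []) r)"
    by simp
  then have "\<pi> z = \<pi> z1 + cs (x (v, [])) * E v"
    using pi_add[OF z1_in scaled_pbasis_in_kQ[where p="(v, [])" and c="x (v, [])"]]
      pi_scaled_pbasis[of "(v, [])" "x (v, [])"] ev_eq_pth
    by simp
  with pi_corner_restrict[OF x, of v v] have decomp: "E v * \<pi> x * E v = cs (x (v, [])) * E v + \<pi> z1"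
    unfolding z_def by (simp add: add.commute)
  have "E v * (cs c * E v) * E v = cs c * E v" for c
    by (simp add: csc_commute[of c "E v"] mult.assoc)
  moreover have "E v * (E v * \<pi> x * E v) * E v = E v * \<pi> x * E v"
    by (simp add: mult.assoc)
  ultimately have "E v * \<pi> z1 * E v = \<pi> z1"
    using decomp by (simp add: distrib_left distrib_right)
  with z1_rad decomp show thesis
    using that by blast
qed

lemma corner_decomposition:
  obtains c r where "r \<in> rad_pow 1" "E v * r * E v = r" "E v * u * E v = cs c * E v + r"
proof -
  obtain x where "x \<in> KQ" "\<pi> x = u"
    by (rule pi_surj)
  with corner_decomposition_pi[of x v] show thesis
    using that by blast
qed

text \<open>If \<open>e\<^sub>v y e\<^sub>v = c e\<^sub>v + r\<close> with \<open>c \<noteq> 0\<close>, the inverse of \<open>1 - c\<inverse> e\<^sub>v y\<close> would put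
  \<open>e\<^sub>v\<close> into the radical.\<close>

lemma corner_unit_not_in_jac_rad:
  assumes c: "c \<noteq> 0" and r: "r \<in> rad_pow 1" "E v * y * E v = cs c * E v + r"
  shows "y \<notin> jac_rad"
proof
  assume "y \<in> jac_rad"
  define t where "t = cs (inverse c) * E v"
  obtain u where u: "u * (1 - t * y) = 1"
    using \<open>y \<in> jac_rad\<close> unfolding jac_rad_def by blast
  have "t * y * E v = cs (inverse c) * (E v * y * E v)"
    unfolding t_def by (simp add: mult.assoc)
  also have "\<dots> = cs (inverse c) * cs c * E v + cs (inverse c) * r"
    using r(2) by (simp add: distrib_left mult.assoc)
  also have "\<dots> = E v + cs (inverse c) * r"
    using c by (simp add: csc_inverse_cancel)
  finally have ty: "t * y * E v = E v + cs (inverse c) * r" .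
  have "E v = u * (1 - t * y) * E v"
    using u by simp
  also have "\<dots> = u * (E v - t * y * E v)"
    by (simp add: mult.assoc right_diff_distrib left_diff_distrib)
  also have "\<dots> = - (u * cs (inverse c) * r)"
    unfolding ty by (simp add: mult.assoc)
  finally have "E v \<in> rad_pow 1"
    using rad_pow_uminus rad_pow_mult_left[OF r(1)] by metis
  then have "cs 1 * E v \<in> rad_pow 1"
    by (simp add: csc_one)
  then have "(1::'k) = 0"
    by (rule scaled_ev_in_rad_imp_zero)
  then show False
    by simp
qed

lemma jac_rad_subset_rad_pow_1: "jac_rad \<subseteq> rad_pow 1"
proof
  fix y :: 'a assume y: "y \<in> jac_rad"
  obtain x where x: "x \<in> KQ" "\<pi> x = y"
    by (rule pi_surj)
  show "y \<in> rad_pow 1"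
  proof (cases "\<forall>v. x (v, []) = 0")
    case True
    then have "x = (\<lambda>r. if snd r = [] then 0 else x r)"
      by (metis prod.collapse)
    then have "x \<in> arrow_ideal_pow src tgt 1"
      using drop_trivial_paths_in_arrow_ideal[OF x(1)] by simp
    with x show ?thesis
      unfolding rad_pow_def by blast
  next
    case False
    then obtain v where "x (v, []) \<noteq> 0"
      by blast
    moreover obtain r where "r \<in> rad_pow 1" "E v * y * E v = cs (x (v, [])) * E v + r"
      using corner_decomposition_pi[OF x(1), of v] x(2) by blast
    ultimately have "y \<notin> jac_rad"
      by (rule corner_unit_not_in_jac_rad)
    with y show ?thesis
      by blast
  qed
qed

lemma jac_rad_eq_rad_pow_1: "jac_rad = rad_pow 1"
  using jac_rad_subset_rad_pow_1 rad_pow_1_subset_jac_rad by blast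

lemma zero_in_Pmod: "0 \<in> Pmod \<pi> s"
  unfolding Pmod_def by (metis (mono_tags, lifting) mem_Collect_eq mult_zero_right)

lemma ev_in_Pmod: "E s \<in> Pmod \<pi> s"
  unfolding Pmod_def by (metis (mono_tags, lifting) mem_Collect_eq mult.right_neutral)

lemma zero_in_DSum: "(\<lambda>s. 0) \<in> DSum \<pi> V"
  unfolding DSum_def using zero_in_Pmod by simp

lemma single_in_DSum: "t \<in> V \<Longrightarrow> y \<in> Pmod \<pi> t \<Longrightarrow> (\<lambda>s. if s = t then y else 0) \<in> DSum \<pi> V"
  unfolding DSum_def using zero_in_Pmod by auto

lemma restrict_in_DSum: "f \<in> DSum \<pi> V \<Longrightarrow> (\<lambda>s. if s \<in> F then f s else 0) \<in> DSum \<pi> V"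
  unfolding DSum_def using zero_in_Pmod by auto

lemma additive_on_DSum_mem:
  fixes g :: "('v \<Rightarrow> 'a) \<Rightarrow> 'a"
  assumes add: "\<forall>\<phi> \<in> DSum \<pi> V. \<forall>\<psi> \<in> DSum \<pi> V. g (\<lambda>t. \<phi> t + \<psi> t) = g \<phi> + g \<psi>"
    and f: "f \<in> DSum \<pi> V"
    and Z: "0 \<in> Z" "\<And>a b. a \<in> Z \<Longrightarrow> b \<in> Z \<Longrightarrow> a + b \<in> Z"
    and single: "\<And>t. t \<in> V \<Longrightarrow> g (\<lambda>s. if s = t then f t else 0) \<in> Z"
  shows "g f \<in> Z"
proof -
  have "g (\<lambda>s. 0) = g (\<lambda>s. 0) + g (\<lambda>s. 0)"
    using add zero_in_DSum[of V] by fastforce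
  then have g0: "g (\<lambda>s. 0) = 0"
    by simp
  have "g (\<lambda>s. if s \<in> F then f s else 0) \<in> Z" if "finite F" "F \<subseteq> V" for F
    using that
  proof (induction F rule: finite_induct)
    case empty
    then show ?case
      using g0 Z(1) by simp
  next
    case (insert t F)
    then have t: "t \<in> V" and IH: "g (\<lambda>s. if s \<in> F then f s else 0) \<in> Z"
      by blast+
    have "f t \<in> Pmod \<pi> t"
      using f t unfolding DSum_def by blast
    then have single_in: "(\<lambda>s. if s = t then f t else 0) \<in> DSum \<pi> V"
      using single_in_DSum[OF t] by blast
    have "(\<lambda>s. if s \<in> insert t F then f s else 0) =
        (\<lambda>s. (if s \<in> F then f s else 0) + (if s = t then f t else 0))"
      using insert.hyps(2) by auto
    then have "g (\<lambda>s. if s \<in> insert t F then f s else 0) =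
        g (\<lambda>s. if s \<in> F then f s else 0) + g (\<lambda>s. if s = t then f t else 0)"
      using add restrict_in_DSum[OF f, of F] single_in by simp
    then show ?case
      using Z(2)[OF IH single[OF t]] by simp
  qed
  moreover have "(\<lambda>s. if s \<in> V then f s else 0) = f"
    using f unfolding DSum_def by auto
  ultimately show ?thesis
    by (metis finite order_refl)
qed

lemma module_map_at_ev:
  fixes h :: "'a \<Rightarrow> 'v \<Rightarrow> 'a"
  assumes h_into: "\<forall>x \<in> Pmod \<pi> j. h x \<in> DSum \<pi> V"
    and h_scale: "\<forall>x \<in> Pmod \<pi> j. \<forall>c. h (x * c) = (\<lambda>t. h x t * c)"
  shows "h (E j) \<in> DSum \<pi> V" "h (E j) t * E j = h (E j) t"
proof -
  show "h (E j) \<in> DSum \<pi> V"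
    using h_into ev_in_Pmod by blast
  have "h (E j * E j) = (\<lambda>t. h (E j) t * E j)"
    using h_scale ev_in_Pmod by blast
  then have "h (E j) = (\<lambda>t. h (E j) t * E j)"
    by simp
  then show "h (E j) t * E j = h (E j) t"
    by (rule fun_cong[symmetric])
qed

lemma module_map_on_single:
  fixes g :: "('v \<Rightarrow> 'a) \<Rightarrow> 'a"
  assumes g_into: "\<forall>\<psi> \<in> DSum \<pi> V. g \<psi> \<in> Pmod \<pi> i"
    and g_scale: "\<forall>\<psi> \<in> DSum \<pi> V. \<forall>c. g (\<lambda>t. \<psi> t * c) = g \<psi> * c"
    and t: "t \<in> V" and y: "E t * y = y"
  obtains u where "E i * u * E t = u" "g (\<lambda>s. if s = t then y else 0) = u * y"
proof -
  define \<epsilon> where "\<epsilon> = (\<lambda>s. if s = t then E t else (0::'a))"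
  have \<epsilon>_in: "\<epsilon> \<in> DSum \<pi> V"
    unfolding \<epsilon>_def using single_in_DSum[OF t ev_in_Pmod] .
  have "g \<epsilon> \<in> Pmod \<pi> i"
    using g_into \<epsilon>_in by blast
  then have "E i * g \<epsilon> = g \<epsilon>"
    unfolding Pmod_def by auto
  moreover have "g \<epsilon> * E t = g \<epsilon>"
  proof -
    have "(\<lambda>s. \<epsilon> s * E t) = \<epsilon>"
      unfolding \<epsilon>_def by auto
    with g_scale \<epsilon>_in show ?thesis
      by metis
  qed
  moreover have "g (\<lambda>s. if s = t then y else 0) = g \<epsilon> * y"
  proof -
    have "(\<lambda>s. if s = t then y else 0) = (\<lambda>s. \<epsilon> s * y)"
      unfolding \<epsilon>_def using y by auto
    with g_scale \<epsilon>_in show ?thesis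
      by simp
  qed
  ultimately show thesis
    using that[of "g \<epsilon>"] by simp
qed

end


section \<open>The linear quiver underlying condition (C)\<close>

locale linear_quiver =
  fixes src tgt :: "'e::finite \<Rightarrow> 'v::finite" and \<phi> :: "'v \<Rightarrow> nat"
  assumes phi_bij: "bij_betw \<phi> UNIV {1..card (UNIV :: 'v set)}"
    and arrow_bij: "bij_betw (\<lambda>x. (\<phi> (src x), \<phi> (tgt x))) {x. src x \<noteq> tgt x}
          {(a, b). (1 \<le> a \<and> b = a + 1 \<and> b \<le> card (UNIV :: 'v set)) \<or>
                   (1 \<le> b \<and> a = b + 1 \<and> a \<le> card (UNIV :: 'v set))}"
begin

definition vdist :: "'v \<Rightarrow> 'v \<Rightarrow> nat" where
  "vdist i j = nat \<bar>int (\<phi> i) - int (\<phi> j)\<bar>"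

definition between :: "'v \<Rightarrow> 'v \<Rightarrow> 'v \<Rightarrow> bool" where
  "between i j t \<longleftrightarrow> min (\<phi> i) (\<phi> j) \<le> \<phi> t \<and> \<phi> t \<le> max (\<phi> i) (\<phi> j)"

definition geodesic :: "'v \<Rightarrow> 'v \<Rightarrow> ('v, 'e) qpath \<Rightarrow> bool" where
  "geodesic i j p \<longleftrightarrow> valid_path src tgt p \<and> fst p = i \<and> pend tgt p = j \<and> plen p = vdist i j"

lemma phi_inj: "\<phi> i = \<phi> j \<Longrightarrow> i = j"
  using phi_bij unfolding bij_betw_def inj_on_def by blast

lemma phi_range: "1 \<le> \<phi> i \<and> \<phi> i \<le> card (UNIV :: 'v set)"
  using phi_bij unfolding bij_betw_def by auto

lemma vdist_eq_0_iff: "vdist i j = 0 \<longleftrightarrow> i = j"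
  unfolding vdist_def using phi_inj by fastforce

lemma vdist_self [simp]: "vdist i i = 0"
  by (simp add: vdist_eq_0_iff)

lemma between_commute: "between i j t \<longleftrightarrow> between j i t"
  unfolding between_def by (auto simp: min.commute max.commute)

lemma between_iff_vdist: "between i j t \<longleftrightarrow> vdist i t + vdist t j = vdist i j"
  unfolding between_def vdist_def by (auto split: abs_split)

lemma not_between_cases:
  assumes "\<not> between i j t"
  shows "(between i t j \<and> t \<noteq> j) \<or> (between t j i \<and> t \<noteq> i)"
  using assms unfolding between_def by auto

lemma arrow_step: "src x \<noteq> tgt x \<Longrightarrow> \<phi> (tgt x) = \<phi> (src x) + 1 \<or> \<phi> (src x) = \<phi> (tgt x) + 1"
  using arrow_bij unfolding bij_betw_def by auto

lemma vdist_arrow_le_1: "vdist (src x) (tgt x) \<le> 1"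
  using arrow_step[of x] unfolding vdist_def by (cases "src x = tgt x") auto

lemma arrow_inj:
  "src x \<noteq> tgt x \<Longrightarrow> src y \<noteq> tgt y \<Longrightarrow> src x = src y \<Longrightarrow> tgt x = tgt y \<Longrightarrow> x = y"
  using arrow_bij unfolding bij_betw_def inj_on_def by auto

lemma exists_arrow_towards:
  assumes "i \<noteq> j"
  obtains x where "src x = i" "src x \<noteq> tgt x" "vdist (tgt x) j + 1 = vdist i j"
proof -
  have ne: "\<phi> i \<noteq> \<phi> j"
    using assms phi_inj by blast
  define k where "k = (if \<phi> i < \<phi> j then \<phi> i + 1 else \<phi> i - 1)"
  have "(\<phi> i, k) \<in> (\<lambda>x. (\<phi> (src x), \<phi> (tgt x))) ` {x. src x \<noteq> tgt x}"
    using arrow_bij phi_range[of i] phi_range[of j] ne unfolding bij_betw_def k_def by auto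
  then obtain x where x: "src x \<noteq> tgt x" "\<phi> (src x) = \<phi> i" "\<phi> (tgt x) = k"
    by auto
  moreover have "src x = i"
    using x phi_inj by blast
  moreover have "vdist (tgt x) j + 1 = vdist i j"
    using x ne unfolding vdist_def k_def by auto
  ultimately show thesis
    using that by blast
qed

lemma vdist_le_length: "valid_path src tgt (i, as) \<Longrightarrow> vdist i (pend tgt (i, as)) \<le> length as"
proof (induction as arbitrary: i)
  case (Cons x as)
  then have "src x = i" "vdist (tgt x) (pend tgt (tgt x, as)) \<le> length as"
    by (auto simp: valid_path_Cons)
  with vdist_arrow_le_1[of x] show ?case
    unfolding vdist_def by simp
qed (simp add: vdist_def)

lemma vdist_le_plen: "valid_path src tgt p \<Longrightarrow> vdist (fst p) (pend tgt p) \<le> plen p"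
  using vdist_le_length[of "fst p" "snd p"] by (simp add: plen_def)

lemma geodesic_exists: "\<exists>p. geodesic i j p"
proof (induction "vdist i j" arbitrary: i)
  case 0
  then have "geodesic i j (i, [])"
    unfolding geodesic_def by (simp add: vdist_eq_0_iff)
  then show ?case ..
next
  case (Suc n)
  then have "i \<noteq> j"
    using vdist_eq_0_iff by force
  then obtain x where x: "src x = i" "src x \<noteq> tgt x" "vdist (tgt x) j + 1 = vdist i j"
    by (rule exists_arrow_towards)
  with Suc obtain p where "geodesic (tgt x) j p"
    by force
  with x have "geodesic i j (i, x # snd p)"
    unfolding geodesic_def by (cases p) (auto simp: valid_path_Cons)
  then show ?case ..
qed

lemma geodesic_ConsD:
  assumes "geodesic i j (i, x # as)"
  shows "src x = i" "src x \<noteq> tgt x" "geodesic (tgt x) j (tgt x, as)"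
    "vdist (tgt x) j + 1 = vdist i j"
    "\<phi> (tgt x) = (if \<phi> i < \<phi> j then \<phi> i + 1 else \<phi> i - 1)"
proof -
  have s: "src x = i" and v: "valid_path src tgt (tgt x, as)"
    and e: "pend tgt (tgt x, as) = j" and l: "length as + 1 = vdist i j"
    using assms unfolding geodesic_def by (auto simp: valid_path_Cons)
  have "vdist (tgt x) j \<le> length as"
    using vdist_le_length[OF v] e by simp
  with vdist_arrow_le_1[of x] s l have eq: "vdist (tgt x) j = length as"
    unfolding vdist_def by auto
  with l s show ne: "src x \<noteq> tgt x"
    by auto
  show "\<phi> (tgt x) = (if \<phi> i < \<phi> j then \<phi> i + 1 else \<phi> i - 1)"
    using arrow_step[OF ne] s eq l unfolding vdist_def by auto
  show "src x = i" "geodesic (tgt x) j (tgt x, as)" "vdist (tgt x) j + 1 = vdist i j"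
    using s v e eq l unfolding geodesic_def by simp_all
qed

lemma geodesic_unique_arrows: "geodesic i j (i, as) \<Longrightarrow> geodesic i j (i, bs) \<Longrightarrow> as = bs"
proof (induction as arbitrary: i bs)
  case Nil
  then show ?case
    unfolding geodesic_def by (simp add: vdist_eq_0_iff)
next
  case (Cons x as)
  then have "vdist i j \<noteq> 0"
    unfolding geodesic_def by simp
  with Cons.prems(2) obtain y bs' where bs: "bs = y # bs'"
    unfolding geodesic_def by (cases bs) auto
  note gx = geodesic_ConsD[OF Cons.prems(1)]
    and gy = geodesic_ConsD[OF Cons.prems(2)[unfolded bs]]
  have "tgt x = tgt y"
    using gx(5) gy(5) phi_inj by metis
  with gx(1,2) gy(1,2) have "x = y"
    using arrow_inj by metis
  with Cons.IH gx(3) gy(3) bs show ?case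
    by blast
qed

lemma geodesic_unique: "geodesic i j p \<Longrightarrow> geodesic i j q \<Longrightarrow> p = q"
  using geodesic_unique_arrows[of i j "snd p" "snd q"] unfolding geodesic_def
  by (metis prod.collapse)

lemma shortest_path_geodesic: "geodesic i j (shortest_path src tgt i j)"
proof -
  obtain p where p: "geodesic i j p"
    using geodesic_exists by blast
  have shortest_iff: "valid_path src tgt q \<and> fst q = i \<and> pend tgt q = j \<and>
      (\<forall>q'. valid_path src tgt q' \<and> fst q' = i \<and> pend tgt q' = j \<longrightarrow> plen q \<le> plen q')
      \<longleftrightarrow> geodesic i j q" for q
  proof
    assume q: "valid_path src tgt q \<and> fst q = i \<and> pend tgt q = j \<and>
      (\<forall>q'. valid_path src tgt q' \<and> fst q' = i \<and> pend tgt q' = j \<longrightarrow> plen q \<le> plen q')"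
    then have "plen q \<le> plen p"
      using p unfolding geodesic_def by blast
    moreover have "vdist i j \<le> plen q"
      using vdist_le_plen[of q] q by simp
    ultimately show "geodesic i j q"
      using q p unfolding geodesic_def by simp
  next
    assume "geodesic i j q"
    then show "valid_path src tgt q \<and> fst q = i \<and> pend tgt q = j \<and>
      (\<forall>q'. valid_path src tgt q' \<and> fst q' = i \<and> pend tgt q' = j \<longrightarrow> plen q \<le> plen q')"
      using vdist_le_plen unfolding geodesic_def by fastforce
  qed
  have "shortest_path src tgt i j = p"
    unfolding shortest_path_def shortest_iff using p geodesic_unique by blast
  with p show ?thesis
    by simp
qed

lemma geodesic_append:
  assumes "geodesic i t p" "geodesic t j q" "vdist i t + vdist t j = vdist i j"
  shows "geodesic i j (i, snd p @ snd q)"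
proof -
  have "valid_path src tgt (fst p, snd p @ snd q)"
    using assms(1,2) unfolding geodesic_def by (cases p; cases q) (simp add: valid_path_append)
  moreover have "pend tgt (i, snd p @ snd q) = j"
    using assms(1,2) unfolding geodesic_def by (metis pend_append prod.collapse)
  ultimately show ?thesis
    using assms unfolding geodesic_def by (auto simp: plen_def)
qed

lemma pverts_geodesic: "geodesic i j (i, as) \<Longrightarrow> pverts tgt (i, as) = {t. between i j t}"
proof (induction as arbitrary: i)
  case Nil
  then have "i = j"
    unfolding geodesic_def by simp
  then show ?case
    unfolding between_def using phi_inj by auto
next
  case (Cons x as)
  note g = geodesic_ConsD[OF Cons.prems]
  have ih: "pverts tgt (tgt x, as) = {t. between (tgt x) j t}"
    using Cons.IH g(3) by blast
  have ne: "\<phi> i \<noteq> \<phi> j"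
    using g(4) phi_inj vdist_eq_0_iff by force
  show ?case
  proof (rule set_eqI)
    fix t
    show "t \<in> pverts tgt (i, x # as) \<longleftrightarrow> t \<in> {t. between i j t}"
    proof (cases "t = i")
      case False
      then have "\<phi> t \<noteq> \<phi> i"
        using phi_inj by blast
      with ih g(5) ne False show ?thesis
        unfolding between_def by auto
    qed (simp add: between_def)
  qed
qed

lemma path_through_between:
  assumes "valid_path src tgt (i, as)" "between i (pend tgt (i, as)) k"
  obtains as1 as2 where "as = as1 @ as2" "pend tgt (i, as1) = k"
  using assms
proof (induction as arbitrary: i)
  case (Nil i)
  then have "k = i"
    unfolding between_def using phi_inj by force
  with Nil.prems(1)[of "[]" "[]"] show ?case
    by simp
next
  case (Cons x as i)
  show ?case
  proof (cases "k = i")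
    case True
    with Cons.prems(1)[of "[]" "x # as"] show ?thesis
      by simp
  next
    case False
    then have "\<phi> k \<noteq> \<phi> i"
      using phi_inj by blast
    moreover have "src x = i" and v: "valid_path src tgt (tgt x, as)"
      using Cons.prems(2) by (auto simp: valid_path_Cons)
    ultimately have "between (tgt x) (pend tgt (tgt x, as)) k"
      using Cons.prems(3) vdist_arrow_le_1[of x] unfolding between_def vdist_def by auto
    then show ?thesis
      using Cons.IH[OF _ v] Cons.prems(1)[of "x # _"] by simp
  qed
qed

end


section \<open>Algebras satisfying condition (C)\<close>

locale cond_C_algebra = bound_quiver src tgt \<pi> + linear_quiver src tgt \<phi>
  for src tgt :: "'e::finite \<Rightarrow> 'v::finite" and \<pi> :: "(('v, 'e) qpath \<Rightarrow> 'k::field) \<Rightarrow> 'a::ring_1"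
    and \<phi> :: "'v \<Rightarrow> nat" +
  assumes arrow_left_factor: "src x \<noteq> tgt x \<Longrightarrow>
      {arr src \<pi> x * l * ev \<pi> (tgt x) | l. True} = {ev \<pi> (src x) * l * ev \<pi> (tgt x) | l. True}"
    and arrow_right_factor: "src x \<noteq> tgt x \<Longrightarrow>
      {ev \<pi> (src x) * l * ev \<pi> (tgt x) | l. True} = {ev \<pi> (src x) * l * arr src \<pi> x | l. True}"
    and wpath_nonzero: "wpath src tgt \<pi> i j \<noteq> 0"
begin

abbreviation W :: "'v \<Rightarrow> 'v \<Rightarrow> 'a" where
  "W \<equiv> wpath src tgt \<pi>"

abbreviation A :: "'e \<Rightarrow> 'a" where
  "A \<equiv> arr src \<pi>"

abbreviation SP :: "'v \<Rightarrow> 'v \<Rightarrow> ('v, 'e) qpath" where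
  "SP \<equiv> shortest_path src tgt"

lemma shortest_path_props:
  "valid_path src tgt (SP i j)" "fst (SP i j) = i" "pend tgt (SP i j) = j"
    "plen (SP i j) = vdist i j"
  using shortest_path_geodesic[of i j] unfolding geodesic_def by simp_all

lemma ev_wpath [simp]: "E i * W i j = W i j"
  using ev_pth[of "SP i j"] shortest_path_props[of i j] unfolding wpath_def by simp

lemma wpath_ev [simp]: "W i j * E j = W i j"
  using pth_ev[of "SP i j"] shortest_path_props[of i j] unfolding wpath_def by simp

lemma ev_wpath_left [simp]: "E i * (W i j * z) = W i j * z"
  by (simp flip: mult.assoc)

lemma wpath_ev_left [simp]: "W i j * (E j * z) = W i j * z"
  by (simp flip: mult.assoc)

lemma wpath_self: "W i i = E i"
proof -
  have "geodesic i i (i, [])"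
    unfolding geodesic_def by simp
  then have "SP i i = (i, [])"
    using geodesic_unique shortest_path_geodesic by blast
  then show ?thesis
    unfolding wpath_def ev_eq_pth by simp
qed

lemma wpath_in_rad: "i \<noteq> j \<Longrightarrow> W i j \<in> rad_pow 1"
  using pth_in_rad_pow[of "SP i j" 1] shortest_path_props[of i j] vdist_eq_0_iff[of i j]
  unfolding wpath_def by simp

lemma valid_arrow_path: "valid_path src tgt (src x, [x])"
  by (simp add: valid_path_Cons)

lemma ev_arr [simp]: "E (src x) * A x = A x"
  unfolding arr_def using ev_pth[OF valid_arrow_path] by simp

lemma arr_ev [simp]: "A x * E (tgt x) = A x"
  unfolding arr_def using pth_ev[OF valid_arrow_path] by simp

lemma ev_arr_left [simp]: "E (src x) * (A x * z) = A x * z"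
  by (simp flip: mult.assoc)

lemma arr_ev_left [simp]: "A x * (E (tgt x) * z) = A x * z"
  by (simp flip: mult.assoc)

lemma arr_in_rad: "A x \<in> rad_pow 1"
  unfolding arr_def by (rule pth_in_rad_pow[OF valid_arrow_path]) simp

lemma wpath_split: "between i j t \<Longrightarrow> W i j = W i t * W t j"
proof -
  assume "between i j t"
  then have "geodesic i j (i, snd (SP i t) @ snd (SP t j))"
    using geodesic_append[OF shortest_path_geodesic shortest_path_geodesic] between_iff_vdist
    by blast
  then have "SP i j = (i, snd (SP i t) @ snd (SP t j))"
    using geodesic_unique shortest_path_geodesic by blast
  then show ?thesis
    unfolding wpath_def using pth_append[of "SP i t" "SP t j"] shortest_path_props by simp
qed

lemma wpath_first_arrow:
  assumes "i \<noteq> j"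
  obtains x where "src x = i" "src x \<noteq> tgt x" "vdist (tgt x) j < vdist i j"
    "between i j (tgt x)" "W i j = A x * W (tgt x) j"
proof -
  obtain as where sp: "SP i j = (i, as)"
    using shortest_path_props(2) by (metis prod.collapse)
  with assms shortest_path_props(4)[of i j] obtain x rest where as: "as = x # rest"
    by (cases as) (auto simp: vdist_eq_0_iff)
  have g: "geodesic i j (i, x # rest)"
    using shortest_path_geodesic[of i j] sp as by simp
  note step = geodesic_ConsD[OF g]
  have "SP (tgt x) j = (tgt x, rest)"
    using step(3) geodesic_unique shortest_path_geodesic by blast
  moreover have "P (i, x # rest) = P (src x, [x]) * P (tgt x, rest)"
    using pth_append[OF valid_arrow_path, of "(tgt x, rest)" x] step(1,3)
    unfolding geodesic_def by simp
  ultimately have "W i j = A x * W (tgt x) j"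
    unfolding wpath_def arr_def sp as by simp
  moreover have "between i j (tgt x)"
    using pverts_geodesic[OF g] by (cases rest) auto
  ultimately show thesis
    using that step(1,2,4) by simp
qed


lemma scaled_arr_in_rad_pow_2_imp_zero: "cs c * A x \<in> rad_pow 2 \<Longrightarrow> c = 0"
  using scaled_short_path_in_rad_pow_imp_zero[OF valid_arrow_path[of x], where c=c]
  unfolding arr_def by (simp add: numeral_2_eq_2)

text \<open>The ideal conditions (C)(b) let an element of \<open>e\<^sub>i \<Lambda> e\<^sub>j\<close> be written as
  \<open>x l e\<^sub>j\<close> for the arrow \<open>x : i \<rightarrow> j\<close>; the scalar part of \<open>e\<^sub>j l e\<^sub>j\<close>
  must vanish because the left-hand side lies in the square of the radical.\<close>

lemma rad_through_arrow:
  assumes x: "src x \<noteq> tgt x" and r: "r \<in> rad_pow 1"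
  obtains r' where "r' \<in> rad_pow 1" "E (src x) * r * A x = A x * r' * E (tgt x)"
proof -
  let ?i = "src x" and ?j = "tgt x"
  have "E ?i * (r * A x) * E ?j \<in> {E ?i * l * E ?j | l. True}"
    by blast
  then obtain l where l: "E ?i * (r * A x) * E ?j = A x * l * E ?j"
    using arrow_left_factor[OF x] by blast
  obtain c r2 where c: "r2 \<in> rad_pow 1" "E ?j * r2 * E ?j = r2" "E ?j * l * E ?j = cs c * E ?j + r2"
    by (rule corner_decomposition)
  have "A x * l * E ?j = A x * (E ?j * l * E ?j)"
    by (simp add: mult.assoc)
  also have "\<dots> = A x * (cs c * E ?j) + A x * r2"
    unfolding c(3) by (simp add: distrib_left)
  also have "A x * (cs c * E ?j) = cs c * A x"
    using arr_ev[of x] csc_commute by (metis mult.assoc)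
  finally have eq: "E ?i * r * A x = cs c * A x + A x * r2"
    using l by (simp add: mult.assoc)
  then have "cs c * A x = E ?i * r * A x - A x * r2"
    by simp
  moreover have "E ?i * r * A x \<in> rad_pow 2"
    using rad_pow_mult_1_1[OF rad_pow_mult_left[OF r] arr_in_rad] by (simp add: mult.assoc)
  moreover have "A x * r2 \<in> rad_pow 2"
    using rad_pow_mult_1_1[OF arr_in_rad c(1)] .
  ultimately have "cs c * A x \<in> rad_pow 2"
    by (simp add: rad_pow_diff)
  then have "c = 0"
    by (rule scaled_arr_in_rad_pow_2_imp_zero)
  with eq have "E ?i * r * A x = A x * r2"
    by (simp add: csc_zero)
  moreover have "r2 * E ?j = r2"
    using c(2) by (rule corner_ev_right)
  ultimately have "E ?i * r * A x = A x * r2 * E ?j"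
    by (simp add: mult.assoc)
  with c(1) show thesis
    by (rule that)
qed

lemma rad_back_through_arrow:
  assumes x: "src x \<noteq> tgt x" and r: "r \<in> rad_pow 1"
  obtains r' where "r' \<in> rad_pow 1" "A x * r * E (tgt x) = E (src x) * r' * A x"
proof -
  let ?i = "src x" and ?j = "tgt x"
  have "E ?i * (A x * r) * E ?j \<in> {E ?i * l * E ?j | l. True}"
    by blast
  then obtain l where l: "E ?i * (A x * r) * E ?j = E ?i * l * A x"
    using arrow_right_factor[OF x] by blast
  obtain c r2 where c: "r2 \<in> rad_pow 1" "E ?i * r2 * E ?i = r2" "E ?i * l * E ?i = cs c * E ?i + r2"
    by (rule corner_decomposition)
  have "E ?i * l * A x = (E ?i * l * E ?i) * A x"
    by (simp add: mult.assoc)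
  also have "\<dots> = cs c * E ?i * A x + r2 * A x"
    unfolding c(3) by (simp add: distrib_right)
  also have "cs c * E ?i * A x = cs c * A x"
    by (simp add: mult.assoc)
  finally have eq: "A x * r * E ?j = cs c * A x + r2 * A x"
    using l by (simp add: mult.assoc)
  then have "cs c * A x = A x * r * E ?j - r2 * A x"
    by simp
  moreover have "A x * r * E ?j \<in> rad_pow 2"
    using rad_pow_mult_right[OF rad_pow_mult_1_1[OF arr_in_rad r]] .
  moreover have "r2 * A x \<in> rad_pow 2"
    using rad_pow_mult_1_1[OF c(1) arr_in_rad] .
  ultimately have "cs c * A x \<in> rad_pow 2"
    by (simp add: rad_pow_diff)
  then have "c = 0"
    by (rule scaled_arr_in_rad_pow_2_imp_zero)
  with eq have "A x * r * E ?j = r2 * A x"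
    by (simp add: csc_zero)
  moreover have "E ?i * r2 = r2"
    using c(2) by (rule corner_ev_left)
  ultimately have "A x * r * E ?j = E ?i * r2 * A x"
    by (simp add: mult.assoc)
  with c(1) show thesis
    by (rule that)
qed

lemma rad_through_wpath:
  "r \<in> rad_pow 1 \<Longrightarrow> \<exists>r' \<in> rad_pow 1. E i * r * W i j = W i j * r'"
proof (induction "vdist i j" arbitrary: i r rule: less_induct)
  case less
  show ?case
  proof (cases "i = j")
    case True
    then have "E i * r * W i j = W i j * (r * E i)"
      by (simp add: wpath_self mult.assoc)
    with rad_pow_mult_right[OF less.prems] show ?thesis
      by blast
  next
    case False
    then obtain x where x: "src x = i" "src x \<noteq> tgt x" "vdist (tgt x) j < vdist i j"
      "W i j = A x * W (tgt x) j"
      by (rule wpath_first_arrow)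
    obtain r1 where r1: "r1 \<in> rad_pow 1" "E i * r * A x = A x * r1 * E (tgt x)"
      using rad_through_arrow[OF x(2) less.prems] x(1) by blast
    obtain r2 where r2: "r2 \<in> rad_pow 1" "E (tgt x) * r1 * W (tgt x) j = W (tgt x) j * r2"
      using less.hyps[OF x(3) r1(1)] by blast
    have "E i * r * W i j = (E i * r * A x) * W (tgt x) j"
      unfolding x(4) by (simp add: mult.assoc)
    also have "\<dots> = A x * (E (tgt x) * r1 * W (tgt x) j)"
      unfolding r1(2) by (simp add: mult.assoc)
    also have "\<dots> = W i j * r2"
      unfolding r2(2) x(4) by (simp add: mult.assoc)
    finally show ?thesis
      using r2(1) by blast
  qed
qed

lemma rad_back_through_wpath:
  "r \<in> rad_pow 1 \<Longrightarrow> \<exists>r' \<in> rad_pow 1. W i j * r * E j = E i * r' * W i j"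
proof (induction "vdist i j" arbitrary: i r rule: less_induct)
  case less
  show ?case
  proof (cases "i = j")
    case True
    with less.prems show ?thesis
      by (intro bexI[of _ r]) (simp_all add: wpath_self)
  next
    case False
    then obtain x where x: "src x = i" "src x \<noteq> tgt x" "vdist (tgt x) j < vdist i j"
      "W i j = A x * W (tgt x) j"
      by (rule wpath_first_arrow)
    obtain r1 where r1: "r1 \<in> rad_pow 1" "W (tgt x) j * r * E j = E (tgt x) * r1 * W (tgt x) j"
      using less.hyps[OF x(3) less.prems] by blast
    obtain r2 where r2: "r2 \<in> rad_pow 1" "A x * r1 * E (tgt x) = E i * r2 * A x"
      using rad_back_through_arrow[OF x(2) r1(1)] x(1) by blast
    have "W i j * r * E j = A x * (W (tgt x) j * r * E j)"
      unfolding x(4) by (simp add: mult.assoc)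
    also have "\<dots> = (A x * r1 * E (tgt x)) * W (tgt x) j"
      unfolding r1(2) by (simp add: mult.assoc)
    also have "\<dots> = E i * r2 * W i j"
      unfolding r2(2) x(4) by (simp add: mult.assoc)
    finally show ?thesis
      using r2(1) by blast
  qed
qed

lemma corner_arrow_factor:
  assumes x: "src x = i" "src x \<noteq> tgt x" and k: "between i j (tgt x)"
  shows "\<exists>z. E i * y * E j = A x * z"
proof -
  let ?k = "tgt x"
  have "E i * y * E j \<in> {A x * z | z. True}"
  proof (rule corner_in_additive_set)
    show "0 \<in> {A x * z | z. True}"
      by (metis (mono_tags, lifting) mem_Collect_eq mult_zero_right)
    show "a + b \<in> {A x * z | z. True}"
      if "a \<in> {A x * z | z. True}" "b \<in> {A x * z | z. True}" for a b
      using that by (auto simp: distrib_left[symmetric])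
  next
    fix p c assume p: "valid_path src tgt p" "fst p = i" "pend tgt p = j"
    then obtain as where p_eq: "p = (i, as)"
      by (metis prod.collapse)
    obtain as1 as2 where as: "as = as1 @ as2" "pend tgt (i, as1) = ?k"
      using path_through_between[of i as ?k] p k unfolding p_eq by auto
    have v1: "valid_path src tgt (i, as1)" and v2: "valid_path src tgt (?k, as2)"
      using p(1) as unfolding p_eq by (simp_all add: valid_path_append)
    have "E i * (cs c * P (i, as1)) * E ?k = cs c * (E i * P (i, as1) * E ?k)"
      by (simp only: mult.assoc[symmetric] csc_commute[of c "E i"])
    also have "E i * P (i, as1) * E ?k = P (i, as1)"
      using ev_pth[OF v1] pth_ev[OF v1] as(2) by simp
    finally have "E i * (cs c * P (i, as1)) * E ?k = cs c * P (i, as1)" .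
    moreover obtain l where "E i * (cs c * P (i, as1)) * E ?k = A x * l * E ?k"
      using arrow_left_factor[OF x(2)] x(1) by blast
    ultimately have l: "cs c * P (i, as1) = A x * l * E ?k"
      by simp
    have "cs c * P p = cs c * P (i, as1) * P (?k, as2)"
      using pth_append[OF v1 v2] as unfolding p_eq by (simp add: mult.assoc)
    also have "\<dots> = A x * (l * E ?k * P (?k, as2))"
      unfolding l by (simp add: mult.assoc)
    finally have "cs c * P p = A x * (l * E ?k * P (?k, as2))" .
    then show "cs c * P p \<in> {A x * z | z. True}"
      by blast
  qed
  then show ?thesis
    by blast
qed

lemma corner_wpath_factor: "\<exists>z. E i * y * E j = W i j * z"
proof (induction "vdist i j" arbitrary: i y rule: less_induct)
  case less
  show ?case
  proof (cases "i = j")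
    case True
    then have "E i * y * E j = W i j * (y * E j)"
      by (simp add: wpath_self mult.assoc)
    then show ?thesis
      by blast
  next
    case False
    then obtain x where x: "src x = i" "src x \<noteq> tgt x" "vdist (tgt x) j < vdist i j"
      "between i j (tgt x)" "W i j = A x * W (tgt x) j"
      by (rule wpath_first_arrow)
    obtain z where z: "E i * y * E j = A x * z"
      using corner_arrow_factor[OF x(1,2,4)] by blast
    obtain z' where z': "E (tgt x) * z * E j = W (tgt x) j * z'"
      using less.hyps[OF x(3)] by blast
    have "E i * y * E j = E i * y * E j * E j"
      by (simp add: mult.assoc)
    also have "\<dots> = A x * (E (tgt x) * z * E j)"
      unfolding z by (simp add: mult.assoc)
    also have "\<dots> = W i j * z'"
      unfolding z' x(5) by (simp add: mult.assoc)
    finally show ?thesis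
      by blast
  qed
qed


lemma csc_ev_wpath: "cs c * E i * W i j = W i j * cs c"
  by (simp add: mult.assoc csc_commute)

lemma wpath_csc_ev: "W i j * (cs c * E j) = W i j * cs c"
proof -
  have "W i j * (cs c * E j) = cs c * W i j * E j"
    by (simp add: csc_commute mult.assoc)
  also have "\<dots> = W i j * cs c"
    by (simp add: mult.assoc csc_commute)
  finally show ?thesis .
qed

lemma corner_right_normal_form:
  obtains c r where "r \<in> rad_pow 1" "E j * r * E j = r" "E i * y * E j = W i j * (cs c * E j + r)"
proof -
  obtain z where z: "E i * y * E j = W i j * z"
    using corner_wpath_factor by blast
  have "E i * y * E j = E i * y * E j * E j"
    by (simp add: mult.assoc)
  also have "\<dots> = W i j * (E j * z * E j)"
    unfolding z by (simp add: mult.assoc)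
  finally have "E i * y * E j = W i j * (E j * z * E j)" .
  moreover obtain c r where "r \<in> rad_pow 1" "E j * r * E j = r" "E j * z * E j = cs c * E j + r"
    by (rule corner_decomposition)
  ultimately show thesis
    using that[of r c] by simp
qed

text \<open>The left normal form comes from the right one by moving the radical part across
  \<open>W i j\<close>, which keeps the scalar.\<close>

lemma corner_normal_forms:
  obtains c r r' where "r \<in> rad_pow 1" "E j * r * E j = r" "r' \<in> rad_pow 1" "E i * r' * E i = r'"
    "E i * y * E j = W i j * (cs c * E j + r)" "E i * y * E j = (cs c * E i + r') * W i j"
proof -
  obtain c r where r: "r \<in> rad_pow 1" "E j * r * E j = r" "E i * y * E j = W i j * (cs c * E j + r)"
    by (rule corner_right_normal_form)
  have "r * E j = r"
    using r(2) by (rule corner_ev_right)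
  obtain r1 where r1: "r1 \<in> rad_pow 1" "W i j * r * E j = E i * r1 * W i j"
    using rad_back_through_wpath[OF r(1)] by blast
  define r' where "r' = E i * r1 * E i"
  have r'_rad: "r' \<in> rad_pow 1"
    unfolding r'_def using rad_pow_mult_left[OF rad_pow_mult_right[OF r1(1)]]
    by (simp add: mult.assoc)
  have r'_corner: "E i * r' * E i = r'"
    unfolding r'_def by (simp add: mult.assoc)
  have "W i j * (cs c * E j + r) = W i j * cs c + W i j * r"
    by (simp add: distrib_left wpath_csc_ev)
  also have "W i j * cs c = cs c * E i * W i j"
    by (rule csc_ev_wpath[symmetric])
  also have "W i j * r = r' * W i j"
    unfolding r'_def using r1(2) \<open>r * E j = r\<close> by (simp add: mult.assoc)
  finally have "E i * y * E j = (cs c * E i + r') * W i j"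
    using r(3) by (simp add: distrib_right)
  with r(1,2) r'_rad r'_corner r(3) show thesis
    by (rule that)
qed

lemma left_coeff_unique:
  assumes l1: "l1 \<in> rad_pow 1" and l2: "l2 \<in> rad_pow 1"
    and eq: "(cs a * E i + l1) * W i j = (cs b * E i + l2) * W i j"
  shows "a = b"
proof (rule ccontr)
  assume ne: "a \<noteq> b"
  have "cs a * W i j + l1 * W i j = cs b * W i j + l2 * W i j"
    using eq by (simp add: distrib_right mult.assoc)
  then have "cs (a - b) * W i j = (l2 - l1) * W i j"
    by (simp add: csc_diff algebra_simps)
  then have "cs (inverse (a - b)) * (cs (a - b) * W i j) =
      cs (inverse (a - b)) * ((l2 - l1) * W i j)"
    by simp
  then have "W i j = (cs (inverse (a - b)) * (l2 - l1)) * W i j"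
    using ne by (simp add: csc_inverse_cancel flip: mult.assoc)
  moreover have "cs (inverse (a - b)) * (l2 - l1) \<in> rad_pow 1"
    using rad_pow_mult_left[OF rad_pow_diff[OF l2 l1]] .
  ultimately have "W i j = 0"
    by (rule rad_fixed_left_eq_0[rotated])
  with wpath_nonzero show False
    by blast
qed

lemma right_coeff_unique:
  assumes l1: "l1 \<in> rad_pow 1" and l2: "l2 \<in> rad_pow 1"
    and eq: "W i j * (cs a * E j + l1) = W i j * (cs b * E j + l2)"
  shows "a = b"
proof (rule ccontr)
  assume ne: "a \<noteq> b"
  have "W i j * cs a + W i j * l1 = W i j * cs b + W i j * l2"
    using eq by (simp add: distrib_left wpath_csc_ev)
  then have "W i j * cs (a - b) = W i j * (l2 - l1)"
    by (simp add: csc_diff algebra_simps)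
  then have "W i j * cs (a - b) * cs (inverse (a - b)) = W i j * (l2 - l1) * cs (inverse (a - b))"
    by simp
  then have "W i j = W i j * ((l2 - l1) * cs (inverse (a - b)))"
    using ne by (simp add: mult.assoc csc_mult csc_one)
  moreover have "(l2 - l1) * cs (inverse (a - b)) \<in> rad_pow 1"
    using rad_pow_mult_right[OF rad_pow_diff[OF l2 l1]] .
  ultimately have "W i j = 0"
    by (rule rad_fixed_right_eq_0[rotated])
  with wpath_nonzero show False
    by blast
qed


lemma factors_through_if_between:
  assumes t: "t \<in> V" "between i j t" and M: "E i * M = M"
  shows "factors_through \<pi> (\<lambda>x. M * W i j * x) j i V"
proof -
  define h :: "'a \<Rightarrow> 'v \<Rightarrow> 'a" where "h = (\<lambda>x s. if s = t then W t j * x else 0)"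
  define g :: "('v \<Rightarrow> 'a) \<Rightarrow> 'a" where "g = (\<lambda>\<psi>. M * W i t * \<psi> t)"
  have "\<forall>x \<in> Pmod \<pi> j. h x \<in> DSum \<pi> V"
  proof
    fix x
    have "W t j * x \<in> Pmod \<pi> t"
      unfolding Pmod_def by (metis (mono_tags, lifting) ev_wpath_left mem_Collect_eq)
    then show "h x \<in> DSum \<pi> V"
      unfolding h_def using single_in_DSum[OF t(1)] by blast
  qed
  moreover have "\<forall>x \<in> Pmod \<pi> j. \<forall>y \<in> Pmod \<pi> j. h (x + y) = (\<lambda>s. h x s + h y s)"
    unfolding h_def by (auto simp: distrib_left)
  moreover have "\<forall>x \<in> Pmod \<pi> j. \<forall>c. h (x * c) = (\<lambda>s. h x s * c)"
    unfolding h_def by (auto simp: mult.assoc)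
  moreover have "\<forall>\<psi> \<in> DSum \<pi> V. g \<psi> \<in> Pmod \<pi> i"
  proof
    fix \<psi>
    have "g \<psi> = E i * g \<psi>"
      unfolding g_def by (metis M mult.assoc)
    then show "g \<psi> \<in> Pmod \<pi> i"
      unfolding Pmod_def by blast
  qed
  moreover have "\<forall>\<psi> \<in> DSum \<pi> V. \<forall>\<psi>' \<in> DSum \<pi> V. g (\<lambda>s. \<psi> s + \<psi>' s) = g \<psi> + g \<psi>'"
    unfolding g_def by (simp add: distrib_left)
  moreover have "\<forall>\<psi> \<in> DSum \<pi> V. \<forall>c. g (\<lambda>s. \<psi> s * c) = g \<psi> * c"
    unfolding g_def by (simp add: mult.assoc)
  moreover have "\<forall>x \<in> Pmod \<pi> j. g (h x) = M * W i j * x"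
    unfolding g_def h_def wpath_split[OF t(2)] by (simp add: mult.assoc)
  ultimately show ?thesis
    unfolding factors_through_def by blast
qed


lemma product_beyond_target_in_wpath_rad:
  assumes t: "between i t j" "t \<noteq> j" and u: "E i * u * E t = u"
  shows "\<exists>r \<in> rad_pow 1. u * y = W i j * r"
proof -
  obtain c r' where r': "r' \<in> rad_pow 1" "E i * r' * E i = r'"
    "E i * u * E t = (cs c * E i + r') * W i t"
    by (rule corner_normal_forms[where y=u])
  obtain r2 where r2: "r2 \<in> rad_pow 1" "E i * r' * W i j = W i j * r2"
    using rad_through_wpath[OF r'(1)] by blast
  have "E i * r' = r'"
    using r'(2) by (rule corner_ev_left)
  then have moved: "(cs c * E i + r') * W i j = W i j * (cs c + r2)"
    using csc_ev_wpath[of c i j] r2(2) by (simp add: distrib_left distrib_right)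
  have "u * y = ((cs c * E i + r') * W i j) * (W j t * y)"
    using u r'(3) unfolding wpath_split[OF t(1)] by (simp add: mult.assoc)
  also have "\<dots> = W i j * ((cs c + r2) * W j t * y)"
    unfolding moved by (simp add: mult.assoc)
  finally have "u * y = W i j * ((cs c + r2) * W j t * y)" .
  moreover have "(cs c + r2) * W j t * y \<in> rad_pow 1"
    using t(2) rad_pow_mult_right[OF rad_pow_mult_left[OF wpath_in_rad[of j t]]] by blast
  ultimately show ?thesis
    by blast
qed

lemma product_before_source_in_wpath_rad:
  assumes t: "between t j i" "t \<noteq> i" and u: "E i * u = u" and y: "E t * y * E j = y"
  shows "\<exists>r \<in> rad_pow 1. u * y = W i j * r"
proof -
  obtain z where "E t * y * E j = W t j * z"
    using corner_wpath_factor by blast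
  with y have yz: "y = W t j * z"
    by simp
  define q where "q = u * W t i"
  have q_rad: "q \<in> rad_pow 1"
    unfolding q_def using rad_pow_mult_left[OF wpath_in_rad] t(2) by blast
  have "E i * q = q"
    unfolding q_def using u by (simp flip: mult.assoc)
  obtain r2 where r2: "r2 \<in> rad_pow 1" "E i * q * W i j = W i j * r2"
    using rad_through_wpath[OF q_rad] by blast
  have "u * y = E i * q * W i j * z"
    unfolding yz wpath_split[OF t(1)] q_def using \<open>E i * q = q\<close> by (simp add: q_def mult.assoc)
  also have "\<dots> = W i j * (r2 * z)"
    unfolding r2(2) by (simp add: mult.assoc)
  finally show ?thesis
    using rad_pow_mult_right[OF r2(1)] by blast
qed

lemma product_outside_in_wpath_rad:
  assumes t: "\<not> between i j t" and u: "E i * u * E t = u" and y: "E t * y * E j = y"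
  shows "\<exists>r \<in> rad_pow 1. u * y = W i j * r"
proof -
  from u have "E i * u = u"
    by (metis ev_idem_left mult.assoc)
  with not_between_cases[OF t] u y show ?thesis
    using product_beyond_target_in_wpath_rad product_before_source_in_wpath_rad by blast
qed

lemma unit_left_multiple_not_in_wpath_rad:
  assumes a: "a \<noteq> 0" and l: "l \<in> rad_pow 1" "E i * l = l"
  shows "(cs a * E i + l) * W i j \<notin> {W i j * r | r. r \<in> rad_pow 1}"
proof
  assume "(cs a * E i + l) * W i j \<in> {W i j * r | r. r \<in> rad_pow 1}"
  then obtain r0 where r0: "r0 \<in> rad_pow 1" "(cs a * E i + l) * W i j = W i j * r0"
    by blast
  obtain r1 where r1: "r1 \<in> rad_pow 1" "E i * l * W i j = W i j * r1"
    using rad_through_wpath[OF l(1)] by blast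
  have "(cs a * E i + l) * W i j = W i j * cs a + W i j * r1"
    using csc_ev_wpath[of a i j] r1(2) l(2) by (simp add: distrib_right)
  with r0(2) have "W i j * cs a = W i j * (r0 - r1)"
    by (simp add: right_diff_distrib eq_diff_eq)
  then have "W i j * cs a * cs (inverse a) = W i j * (r0 - r1) * cs (inverse a)"
    by simp
  then have "W i j = W i j * ((r0 - r1) * cs (inverse a))"
    using a by (simp add: mult.assoc csc_mult csc_one)
  moreover have "(r0 - r1) * cs (inverse a) \<in> rad_pow 1"
    using rad_pow_mult_right[OF rad_pow_diff[OF r0(1) r1(1)]] .
  ultimately have "W i j = 0"
    by (rule rad_fixed_right_eq_0[rotated])
  with wpath_nonzero show False
    by blast
qed


text \<open>If \<open>f\<close> factors through \<open>\<Oplus>\<^sub>t\<^sub>\<in>\<^sub>V P\<^sub>t\<close> with no \<open>t\<close> between \<open>i\<close> and \<open>j\<close>, then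
  \<open>f(e\<^sub>j)\<close> is a sum of products through such \<open>t\<close>, each in \<open>W i j \<cdot> rad \<Lambda>\<close>.\<close>

lemma factors_through_imp_between:
  assumes a: "a \<noteq> 0" and l: "l \<in> rad_pow 1" "E i * l = l"
    and ft: "factors_through \<pi> (\<lambda>x. (cs a * E i + l) * W i j * x) j i V"
  shows "\<exists>t \<in> V. between i j t"
proof (rule ccontr)
  assume none: "\<not> (\<exists>t \<in> V. between i j t)"
  obtain h :: "'a \<Rightarrow> 'v \<Rightarrow> 'a" and g :: "('v \<Rightarrow> 'a) \<Rightarrow> 'a" where
    h_into: "\<forall>x \<in> Pmod \<pi> j. h x \<in> DSum \<pi> V" and
    h_scale: "\<forall>x \<in> Pmod \<pi> j. \<forall>c. h (x * c) = (\<lambda>t. h x t * c)" and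
    g_into: "\<forall>\<psi> \<in> DSum \<pi> V. g \<psi> \<in> Pmod \<pi> i" and
    g_add: "\<forall>\<psi> \<in> DSum \<pi> V. \<forall>\<psi>' \<in> DSum \<pi> V. g (\<lambda>t. \<psi> t + \<psi>' t) = g \<psi> + g \<psi>'" and
    g_scale: "\<forall>\<psi> \<in> DSum \<pi> V. \<forall>c. g (\<lambda>t. \<psi> t * c) = g \<psi> * c" and
    gh: "\<forall>x \<in> Pmod \<pi> j. g (h x) = (cs a * E i + l) * W i j * x"
    using ft unfolding factors_through_def by blast
  define Z where "Z = {W i j * r | r. r \<in> rad_pow 1}"
  define f where "f = h (E j)"
  have f_in: "f \<in> DSum \<pi> V" and f_ev: "f t * E j = f t" for t
    unfolding f_def using module_map_at_ev[OF h_into h_scale] by blast+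
  have "g f \<in> Z"
  proof (rule additive_on_DSum_mem[OF g_add f_in])
    show "0 \<in> Z"
      unfolding Z_def using zero_in_rad_pow by force
    show "u + v \<in> Z" if "u \<in> Z" "v \<in> Z" for u v
      using that rad_pow_add unfolding Z_def by (force simp: distrib_left)
  next
    fix t assume t: "t \<in> V"
    have "f t \<in> Pmod \<pi> t"
      using f_in t unfolding DSum_def by blast
    then have y: "E t * f t = f t"
      unfolding Pmod_def by auto
    obtain u where u: "E i * u * E t = u" "g (\<lambda>s. if s = t then f t else 0) = u * f t"
      by (rule module_map_on_single[OF g_into g_scale t y])
    have "E t * f t * E j = f t"
      using y f_ev by (simp add: mult.assoc)
    with u(1) t none obtain r where "r \<in> rad_pow 1" "u * f t = W i j * r"
      using product_outside_in_wpath_rad[of i j t u "f t"] by blast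
    then show "g (\<lambda>s. if s = t then f t else 0) \<in> Z"
      unfolding Z_def u(2) by blast
  qed
  moreover have "g f = (cs a * E i + l) * W i j"
    unfolding f_def using gh ev_in_Pmod by (simp add: mult.assoc)
  ultimately show False
    using unit_left_multiple_not_in_wpath_rad[OF a l, of j] unfolding Z_def by simp
qed

lemma corner_jac_rad_iff: "l \<in> {E v * r * E v | r. r \<in> jac_rad} \<longleftrightarrow> l \<in> rad_pow 1 \<and> E v * l * E v = l"
proof
  assume "l \<in> {E v * r * E v | r. r \<in> jac_rad}"
  then obtain r where "r \<in> rad_pow 1" "l = E v * r * E v"
    unfolding jac_rad_eq_rad_pow_1 by blast
  then show "l \<in> rad_pow 1 \<and> E v * l * E v = l"
    using rad_pow_mult_left rad_pow_mult_right by (auto simp: mult.assoc)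
next
  assume "l \<in> rad_pow 1 \<and> E v * l * E v = l"
  then show "l \<in> {E v * r * E v | r. r \<in> jac_rad}"
    unfolding jac_rad_eq_rad_pow_1 by force
qed

lemma arrow_jac_rad_commute:
  assumes "src \<alpha> \<noteq> tgt \<alpha>"
  shows "{E (src \<alpha>) * r * A \<alpha> | r. r \<in> jac_rad} = {A \<alpha> * r * E (tgt \<alpha>) | r. r \<in> jac_rad}"
proof (intro set_eqI iffI)
  fix z assume "z \<in> {E (src \<alpha>) * r * A \<alpha> | r. r \<in> jac_rad}"
  then obtain r where "r \<in> rad_pow 1" "z = E (src \<alpha>) * r * A \<alpha>"
    unfolding jac_rad_eq_rad_pow_1 by blast
  with rad_through_arrow[OF assms] show "z \<in> {A \<alpha> * r * E (tgt \<alpha>) | r. r \<in> jac_rad}"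
    unfolding jac_rad_eq_rad_pow_1 by blast
next
  fix z assume "z \<in> {A \<alpha> * r * E (tgt \<alpha>) | r. r \<in> jac_rad}"
  then obtain r where "r \<in> rad_pow 1" "z = A \<alpha> * r * E (tgt \<alpha>)"
    unfolding jac_rad_eq_rad_pow_1 by blast
  with rad_back_through_arrow[OF assms] show "z \<in> {E (src \<alpha>) * r * A \<alpha> | r. r \<in> jac_rad}"
    unfolding jac_rad_eq_rad_pow_1 by blast
qed

lemma corner_wpath_coefficient:
  assumes "w \<in> {E i * x * E j | x. True}"
  shows "\<exists>a. (\<exists>l \<in> {E i * r * E i | r. r \<in> jac_rad}. w = (cs a * E i + l) * W i j) \<and>
           (\<exists>l' \<in> {E j * r * E j | r. r \<in> jac_rad}. w = W i j * (cs a * E j + l')) \<and>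
           (\<forall>b. (\<exists>l \<in> {E i * r * E i | r. r \<in> jac_rad}. w = (cs b * E i + l) * W i j) \<longrightarrow> b = a) \<and>
           (\<forall>b. (\<exists>l' \<in> {E j * r * E j | r. r \<in> jac_rad}. w = W i j * (cs b * E j + l')) \<longrightarrow> b = a)"
proof -
  obtain x where x: "w = E i * x * E j"
    using assms by blast
  obtain c r r' where r: "r \<in> rad_pow 1" "E j * r * E j = r"
    and r': "r' \<in> rad_pow 1" "E i * r' * E i = r'"
    and right: "E i * x * E j = W i j * (cs c * E j + r)"
    and left: "E i * x * E j = (cs c * E i + r') * W i j"
    by (rule corner_normal_forms)
  show ?thesis
  proof (intro exI[of _ c] conjI allI impI)
    show "\<exists>l \<in> {E i * r * E i | r. r \<in> jac_rad}. w = (cs c * E i + l) * W i j"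
      using r' left x corner_jac_rad_iff by blast
    show "\<exists>l' \<in> {E j * r * E j | r. r \<in> jac_rad}. w = W i j * (cs c * E j + l')"
      using r right x corner_jac_rad_iff by blast
  next
    fix b assume "\<exists>l \<in> {E i * r * E i | r. r \<in> jac_rad}. w = (cs b * E i + l) * W i j"
    then obtain l where "l \<in> rad_pow 1" "w = (cs b * E i + l) * W i j"
      using corner_jac_rad_iff by blast
    with r'(1) left x show "b = c"
      using left_coeff_unique by simp
  next
    fix b assume "\<exists>l' \<in> {E j * r * E j | r. r \<in> jac_rad}. w = W i j * (cs b * E j + l')"
    then obtain l' where "l' \<in> rad_pow 1" "w = W i j * (cs b * E j + l')"
      using corner_jac_rad_iff by blast
    with r(1) right x show "b = c"
      using right_coeff_unique by simp
  qed
qed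

lemma factors_through_iff_passes_through:
  assumes a: "a \<noteq> 0" and l: "l \<in> {E i * r * E i | r. r \<in> jac_rad}"
  shows "factors_through \<pi> (\<lambda>x. (cs a * E i + l) * W i j * x) j i V \<longleftrightarrow>
    (\<exists>t \<in> V. t \<in> pverts tgt (SP j i))"
proof -
  have l_rad: "l \<in> rad_pow 1" and "E i * l * E i = l"
    using l corner_jac_rad_iff by blast+
  from \<open>E i * l * E i = l\<close> have l_corner: "E i * l = l"
    by (rule corner_ev_left)
  then have M: "E i * (cs a * E i + l) = cs a * E i + l"
    by (simp add: distrib_left csc_commute flip: mult.assoc)
  have "SP j i = (j, snd (SP j i))"
    using shortest_path_props(2)[of j i] by (metis prod.collapse)
  then have pverts_eq: "pverts tgt (SP j i) = {t. between i j t}"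
    using pverts_geodesic[of j i "snd (SP j i)"] shortest_path_geodesic[of j i]
    by (simp add: between_commute)
  show ?thesis
  proof
    assume "factors_through \<pi> (\<lambda>x. (cs a * E i + l) * W i j * x) j i V"
    with factors_through_imp_between[OF a l_rad l_corner] pverts_eq
    show "\<exists>t \<in> V. t \<in> pverts tgt (SP j i)"
      by blast
  next
    assume "\<exists>t \<in> V. t \<in> pverts tgt (SP j i)"
    then obtain t where "t \<in> V" "between i j t"
      using pverts_eq by blast
    then show "factors_through \<pi> (\<lambda>x. (cs a * E i + l) * W i j * x) j i V"
      using factors_through_if_between M by blast
  qed
qed

end

lemma cond_C_algebraI:
  fixes src tgt :: "'e::finite \<Rightarrow> 'v::finite"
    and \<pi> :: "(('v, 'e) qpath \<Rightarrow> 'k::field) \<Rightarrow> 'a::ring_1"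
  assumes "bound_quiver_alg src tgt \<pi>" "cond_C src tgt \<pi>"
  obtains \<phi> where "cond_C_algebra src tgt \<pi> \<phi>"
proof -
  obtain \<phi> :: "'v \<Rightarrow> nat" where \<phi>: "linear_quiver src tgt \<phi>"
    using assms(2) unfolding cond_C_def linear_quiver_def by blast
  have ideals: "\<forall>x. src x \<noteq> tgt x \<longrightarrow>
      {arr src \<pi> x * l * ev \<pi> (tgt x) | l. True} = {ev \<pi> (src x) * l * ev \<pi> (tgt x) | l. True} \<and>
      {ev \<pi> (src x) * l * ev \<pi> (tgt x) | l. True} = {ev \<pi> (src x) * l * arr src \<pi> x | l. True}"
    and nonzero: "\<forall>i j. wpath src tgt \<pi> i j \<noteq> 0"
    using assms(2) unfolding cond_C_def by blast+
  have "cond_C_algebra src tgt \<pi> \<phi>"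
    using bound_quiver.intro[OF assms(1)] \<phi>
  proof (rule cond_C_algebra.intro)
    show "cond_C_algebra_axioms src tgt \<pi>"
      by (rule cond_C_algebra_axioms.intro) (use ideals nonzero in blast)+
  qed
  then show thesis
    by (rule that)
qed

theorem lemma4p3:
  fixes src tgt :: "'e::finite \<Rightarrow> 'v::finite"
    and \<pi> :: "(('v, 'e) qpath \<Rightarrow> 'k::field) \<Rightarrow> 'a::ring_1"
  assumes "alg_closed TYPE('k)"
    and "bound_quiver_alg src tgt \<pi>"
    and "cond_C src tgt \<pi>"
  shows "(\<forall>\<alpha>. src \<alpha> \<noteq> tgt \<alpha> \<longrightarrow>
           {ev \<pi> (src \<alpha>) * r * arr src \<pi> \<alpha> | r. r \<in> jac_rad} =
           {arr src \<pi> \<alpha> * r * ev \<pi> (tgt \<alpha>) | r. r \<in> jac_rad}) \<and>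
         (\<forall>i j w. w \<in> {ev \<pi> i * x * ev \<pi> j | x. True} \<longrightarrow>
           (\<exists>a. (\<exists>l \<in> {ev \<pi> i * r * ev \<pi> i | r. r \<in> jac_rad}.
                    w = (csc \<pi> a * ev \<pi> i + l) * wpath src tgt \<pi> i j) \<and>
                (\<exists>l' \<in> {ev \<pi> j * r * ev \<pi> j | r. r \<in> jac_rad}.
                    w = wpath src tgt \<pi> i j * (csc \<pi> a * ev \<pi> j + l')) \<and>
                (\<forall>b. (\<exists>l \<in> {ev \<pi> i * r * ev \<pi> i | r. r \<in> jac_rad}.
                    w = (csc \<pi> b * ev \<pi> i + l) * wpath src tgt \<pi> i j) \<longrightarrow> b = a) \<and>
                (\<forall>b. (\<exists>l' \<in> {ev \<pi> j * r * ev \<pi> j | r. r \<in> jac_rad}.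
                    w = wpath src tgt \<pi> i j * (csc \<pi> b * ev \<pi> j + l')) \<longrightarrow> b = a))) \<and>
         (\<forall>i j a l V. a \<noteq> 0 \<longrightarrow> l \<in> {ev \<pi> i * r * ev \<pi> i | r. r \<in> jac_rad} \<longrightarrow>
           (factors_through \<pi> (\<lambda>x. (csc \<pi> a * ev \<pi> i + l) * wpath src tgt \<pi> i j * x) j i V
            \<longleftrightarrow> (\<exists>t \<in> V. t \<in> pverts tgt (shortest_path src tgt j i))))"
proof -
  obtain \<phi> where "cond_C_algebra src tgt \<pi> \<phi>"
    using cond_C_algebraI[OF assms(2,3)] .
  then interpret cond_C_algebra src tgt \<pi> \<phi> .
  show ?thesis
    by (intro conjI allI impI)
      (assumption | rule arrow_jac_rad_commute corner_wpath_coefficient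
        factors_through_iff_passes_through)+
qed

end
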